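(* Let $(S,\mathcal{S},\mu)$ be a $\sigma$-finite measure space with the approximation-by-averaging property, $q\in[2,\infty)$, $p\in[1,q]$, $X\in L^1(\Omega;L^p(S))$. For all $\ell\in\mathbb{N}$ let $X_\ell\in L^q(\Omega;L^p(S))\cap L^p(S;L^q(\Omega))$, $X_0:=0$, $\xi_\ell:=X_\ell-X_{\ell-1}$, let $\mathcal{C}_\ell$ be the cost of one sample of $\xi_\ell$, and suppose there are $\alpha,\beta,\gamma,C_\alpha,C_\beta,C_\gamma\in(0,\infty)$, $A>1$ and integers $N_\ell\eqsim A^\ell$ with, for all $\ell$, $$\|\mathbb{E}[X]-\mathbb{E}[X_\ell]\|_{L^p(S)}\le C_\alpha N_\ell^{-\alpha},\quad\|X_\ell-\mathbb{E}[X_\ell]-(X_{\ell-1}-\mathbb{E}[X_{\ell-1}])\|_{L^p(S;L^q(\Omega))}\le C_\beta N_\ell^{-\beta},\quad\mathcal{C}_\ell\le C_\gamma N_\ell^\gamma.$$ For each $\ell$ let $(\xi_{\ell,j})_j$ be independent copies of $\xi_\ell$. Then for every $\epsilon\in(0,1/2]$ there exist $L,M_1,\dots,M_L\in\mathbb{N}$ with $$\Big\|\mathbb{E}[X]-\sum_{\ell=1}^L\frac1{M_\ell}\sum_{j=1}^{M_\ell}\xi_{\ell,j}\Big\|_{L^q(\Omega;L^p(S))}<\epsilon$$ at cost $\sum_\ell M_\ell\mathcal{C}_\ell\lesssim\epsilon^{-\gamma/\alpha}+\epsilon^{-2}$ if $\beta>\gamma/2$; $\lesssim\epsilon^{-\gamma/\alpha}+\epsilon^{-2}|\log_A\epsilon|^3$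 if $\beta=\gamma/2$; $\lesssim\epsilon^{-\gamma/\alpha}+\epsilon^{-2-\frac{\gamma-2\beta}{\alpha}}$ if $\beta<\gamma/2$ (implicit constants independent of $\epsilon$).
   Context: Approximation-by-averaging property: for every $n$ there is a finite or countable family $\{B^n_\kappa\}$ of pairwise disjoint measurable sets of positive finite $\mu$-measure such that for every Banach $E$, $p\in[1,\infty)$, $f\in L^p(S;E)$, $\sum_\kappa\mathbf{1}_{B^n_\kappa}\mu(B^n_\kappa)^{-1}\int_{B^n_\kappa}f\,d\mu\to f$ in $L^p(S;E)$. $L^p(S;L^q(\Omega))$-norms of $L^p(S)$-valued random variables are taken for their jointly measurable versions: $(\int_S(\mathbb{E}|\tilde\xi(s,\cdot)|^q)^{p/q}d\mu)^{1/p}$. *)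

theory Defs
  imports "HOL-Probability.Probability"
begin

(* Power of an extended nonnegative real; only used with positive exponents r > 0,
   where it agrees with the usual convention infinity^r = infinity. *)
definition epowr :: "ennreal \<Rightarrow> real \<Rightarrow> ennreal" where
  "epowr x r = (if x = \<top> then \<top> else ennreal (enn2real x powr r))"

definition Lp_norm :: "'s measure \<Rightarrow> real \<Rightarrow> ('s \<Rightarrow> real) \<Rightarrow> ennreal" where
  "Lp_norm S p f = epowr (\<integral>\<^sup>+ s. ennreal (\<bar>f s\<bar> powr p) \<partial>S) (1 / p)"

definition Lqp_norm :: "'w measure \<Rightarrow> 's measure \<Rightarrow> real \<Rightarrow> real \<Rightarrow> ('w \<Rightarrow> 's \<Rightarrow> real) \<Rightarrow> ennreal" where
  "Lqp_norm P S q p Y =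
     epowr (\<integral>\<^sup>+ \<omega>. epowr (\<integral>\<^sup>+ s. ennreal (\<bar>Y \<omega> s\<bar> powr p) \<partial>S) (q / p) \<partial>P) (1 / q)"

definition Lpq_norm :: "'w measure \<Rightarrow> 's measure \<Rightarrow> real \<Rightarrow> real \<Rightarrow> ('w \<Rightarrow> 's \<Rightarrow> real) \<Rightarrow> ennreal" where
  "Lpq_norm P S p q Y =
     epowr (\<integral>\<^sup>+ s. epowr (\<integral>\<^sup>+ \<omega>. ennreal (\<bar>Y \<omega> s\<bar> powr q) \<partial>P) (p / q) \<partial>S) (1 / p)"

definition jointly_measurable :: "'w measure \<Rightarrow> 's measure \<Rightarrow> ('w \<Rightarrow> 's \<Rightarrow> real) \<Rightarrow> bool" where
  "jointly_measurable P S Y \<longleftrightarrow> (\<lambda>(\<omega>, s). Y \<omega> s) \<in> borel_measurable (P \<Otimes>\<^sub>M S)"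

(* E[Y] as an element of L^p(S), via the jointly measurable version: s |-> E[Y(.,s)] *)
definition expec :: "'w measure \<Rightarrow> ('w \<Rightarrow> 's \<Rightarrow> real) \<Rightarrow> 's \<Rightarrow> real" where
  "expec P Y = (\<lambda>s. \<integral>\<omega>. Y \<omega> s \<partial>P)"

(* law of Y as a random function on space S (product / cylinder sigma-algebra) *)
definition law :: "'w measure \<Rightarrow> 's measure \<Rightarrow> ('w \<Rightarrow> 's \<Rightarrow> real) \<Rightarrow> ('s \<Rightarrow> real) measure" where
  "law P S Y = distr P (PiM (space S) (\<lambda>_. borel)) (\<lambda>\<omega>. restrict (Y \<omega>) (space S))"

definition avg_op :: "'s measure \<Rightarrow> nat set \<Rightarrow> (nat \<Rightarrow> 's set) \<Rightarrow> ('s \<Rightarrow> real) \<Rightarrow> 's \<Rightarrow> real" where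
  "avg_op S K B f = (\<lambda>s. \<Sum>\<^sub>\<infinity>\<kappa>\<in>K. indicator (B \<kappa>) s *
       (set_lebesgue_integral S (B \<kappa>) f / measure S (B \<kappa>)))"

(* approximation-by-averaging property (tested on scalar-valued f) *)
definition approx_by_averaging :: "'s measure \<Rightarrow> bool" where
  "approx_by_averaging S \<longleftrightarrow>
    (\<exists>K :: nat \<Rightarrow> nat set. \<exists>B :: nat \<Rightarrow> nat \<Rightarrow> 's set.
       (\<forall>n. disjoint_family_on (B n) (K n) \<and>
            (\<forall>\<kappa>\<in>K n. B n \<kappa> \<in> sets S \<and> 0 < emeasure S (B n \<kappa>) \<and> emeasure S (B n \<kappa>) < \<infinity>)) \<and>
       (\<forall>p::real. \<forall>f. 1 \<le> p \<longrightarrow> f \<in> borel_measurable S \<longrightarrow> Lp_norm S p f < \<infinity> \<longrightarrow>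
          ((\<lambda>n. Lp_norm S p (\<lambda>s. avg_op S (K n) (B n) f s - f s)) \<longlonglongrightarrow> 0)))"

end

theory Submission
  imports Defs
begin

(* By telescoping, the error of the multilevel estimator is the bias E[X] - E[X_L] minus a sum
   of centred level averages.  Since p <= q, Minkowski's integral inequality moves the
   L^q(Omega)-norm inside the L^p(S)-norm, and for fixed s the level average is the mean of
   M_l independent centred real variables, whose q-th moment is of order M_l^(-q/2) by a
   Marcinkiewicz-Zygmund type inequality (proved by induction from a second-order expansion of
   |a + b|^q).  The triangle inequality then bounds the error by
   C_alpha N_L^(-alpha) + C sum_l M_l^(-1/2) N_l^(-beta).  Taking the least L that makes the bias
   at most eps/4 and M_l proportional to (N_l^(-beta) / N_l^gamma)^(2/3) balances this bound
   against the cost sum_l M_l N_l^gamma; the three regimes correspond to the geometric sum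
   sum_l A^((gamma - 2 beta) l / 3) being bounded, of order L ~ |log_A eps|, or of order
   eps^(-(gamma - 2 beta) / (3 alpha)). *)

section \<open>Powers of extended nonnegative reals and \<open>L\<^sup>r\<close> norms\<close>

lemma epowr_ennreal: "0 \<le> x \<Longrightarrow> epowr (ennreal x) r = ennreal (x powr r)"
  by (simp add: epowr_def)

lemma epowr_top[simp]: "epowr \<top> r = \<top>"
  by (simp add: epowr_def)

lemma epowr_zero[simp]: "r \<noteq> 0 \<Longrightarrow> epowr 0 r = 0"
  by (simp add: epowr_def)

lemma epowr_1[simp]: "epowr x 1 = x"
  by (cases x) (auto simp: epowr_def)

lemma measurable_epowr[measurable]:
  assumes "f \<in> borel_measurable M"
  shows "(\<lambda>x. epowr (f x) r) \<in> borel_measurable M"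
  unfolding epowr_def using assms by measurable

lemma epowr_mono: "x \<le> y \<Longrightarrow> 0 \<le> r \<Longrightarrow> epowr x r \<le> epowr y r"
  by (cases x; cases y) (auto simp: epowr_def top_unique intro!: ennreal_leI powr_mono2)

lemma epowr_eq_0_iff: "0 < r \<Longrightarrow> epowr x r = 0 \<longleftrightarrow> x = 0"
  by (cases x) (auto simp: epowr_def)

lemma epowr_eq_top_iff: "epowr x r = \<top> \<longleftrightarrow> x = \<top>"
  by (cases x) (auto simp: epowr_def)

lemma epowr_epowr: "0 < a \<Longrightarrow> 0 < b \<Longrightarrow> epowr (epowr x a) b = epowr x (a * b)"
  by (cases x) (auto simp: epowr_def powr_powr)

lemma epowr_add_exp: "0 < a \<Longrightarrow> 0 < b \<Longrightarrow> epowr x (a + b) = epowr x a * epowr x b"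
  by (cases x) (auto simp: epowr_def powr_add ennreal_mult)

lemma epowr_of_nat: "epowr (of_nat n) r = ennreal (real n powr r)"
  using epowr_ennreal[of "real n" r] by (simp add: ennreal_of_nat_eq_real_of_nat)

lemma epowr_mult_ennreal:
  assumes "0 \<le> t" "0 < r"
  shows "epowr (ennreal t * x) r = ennreal (t powr r) * epowr x r"
proof (cases x)
  case (real y)
  then show ?thesis
    using assms by (simp add: epowr_ennreal ennreal_mult[symmetric] powr_mult)
next
  case top
  then show ?thesis
    using assms by (cases "t = 0") (auto simp: epowr_def ennreal_mult_top)
qed

definition nn_Lnorm :: "'a measure \<Rightarrow> real \<Rightarrow> ('a \<Rightarrow> ennreal) \<Rightarrow> ennreal" where
  "nn_Lnorm M r u = epowr (\<integral>\<^sup>+ x. epowr (u x) r \<partial>M) (1 / r)"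

lemma nn_integral_epowr_eq_nn_Lnorm:
  "0 < r \<Longrightarrow> (\<integral>\<^sup>+x. epowr (u x) r \<partial>M) = epowr (nn_Lnorm M r u) r"
  by (simp add: nn_Lnorm_def epowr_epowr)

lemma Lp_norm_eq_nn_Lnorm: "Lp_norm S p f = nn_Lnorm S p (\<lambda>s. ennreal \<bar>f s\<bar>)"
  by (simp add: Lp_norm_def nn_Lnorm_def epowr_ennreal)

lemma Lqp_norm_eq_nn_Lnorm:
  "0 < p \<Longrightarrow> 0 < q \<Longrightarrow> Lqp_norm P S q p Y = nn_Lnorm P q (\<lambda>\<omega>. Lp_norm S p (Y \<omega>))"
  by (simp add: Lqp_norm_def nn_Lnorm_def Lp_norm_def epowr_epowr)

lemma Lpq_norm_eq_nn_Lnorm: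
  "0 < p \<Longrightarrow> 0 < q \<Longrightarrow>
    Lpq_norm P S p q Y = nn_Lnorm S p (\<lambda>s. nn_Lnorm P q (\<lambda>\<omega>. ennreal \<bar>Y \<omega> s\<bar>))"
  by (simp add: Lpq_norm_def nn_Lnorm_def epowr_epowr epowr_ennreal)

lemma nn_Lnorm_mono_AE:
  "AE x in M. u x \<le> v x \<Longrightarrow> 0 < r \<Longrightarrow> nn_Lnorm M r u \<le> nn_Lnorm M r v"
  unfolding nn_Lnorm_def
  by (intro epowr_mono nn_integral_mono_AE) (auto elim!: eventually_mono intro: epowr_mono)

lemma nn_Lnorm_cong_AE: "AE x in M. u x = v x \<Longrightarrow> nn_Lnorm M r u = nn_Lnorm M r v"
  unfolding nn_Lnorm_def
  by (intro arg_cong[where f="\<lambda>x. epowr x _"] nn_integral_cong_AE) (auto elim!: eventually_mono)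

lemma nn_Lnorm_cmult:
  assumes "0 \<le> t" "0 < r" "u \<in> borel_measurable M"
  shows "nn_Lnorm M r (\<lambda>x. ennreal t * u x) = ennreal t * nn_Lnorm M r u"
proof -
  have "nn_Lnorm M r (\<lambda>x. ennreal t * u x)
      = ennreal ((t powr r) powr (1/r)) * nn_Lnorm M r u"
    using assms by (simp add: nn_Lnorm_def epowr_mult_ennreal nn_integral_cmult)
  also have "(t powr r) powr (1/r) = t"
    using assms by (simp add: powr_powr)
  finally show ?thesis .
qed

lemma (in prob_space) nn_Lnorm_const: "0 < r \<Longrightarrow> nn_Lnorm M r (\<lambda>x. c) = c"
  by (simp add: nn_Lnorm_def emeasure_space_1 epowr_epowr)

lemma AE_zero_of_nn_Lnorm_eq_0:
  assumes "nn_Lnorm M r u = 0" "0 < r" "u \<in> borel_measurable M"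
  shows "AE x in M. u x = 0"
proof -
  have "(\<integral>\<^sup>+ x. epowr (u x) r \<partial>M) = 0"
    using assms by (simp add: nn_Lnorm_def epowr_eq_0_iff)
  then have "AE x in M. epowr (u x) r = 0"
    using assms by (subst (asm) nn_integral_0_iff_AE) auto
  then show ?thesis
    using assms by (auto simp: epowr_eq_0_iff elim!: eventually_mono)
qed

lemma AE_finite_of_nn_Lnorm_finite:
  assumes "nn_Lnorm M r u < \<top>" "u \<in> borel_measurable M"
  shows "AE x in M. u x < \<top>"
proof -
  have "(\<integral>\<^sup>+ x. epowr (u x) r \<partial>M) < \<top>"
    using assms by (metis nn_Lnorm_def epowr_eq_top_iff less_top)
  from finite_nn_integral_imp_ae_finite[of "\<lambda>x. epowr (u x) r" M] this assms show ?thesis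
    by (auto elim!: eventually_mono) (metis epowr_eq_top_iff less_top)
qed

lemma nn_Lnorm_cases:
  obtains "nn_Lnorm M r u = 0" | "nn_Lnorm M r u = \<top>"
    | a where "nn_Lnorm M r u = ennreal a" "0 < a"
  by (cases "nn_Lnorm M r u") (auto simp: order.order_iff_strict)

section \<open>Hoelder and Minkowski inequalities for nonnegative functions\<close>

text \<open>The weights are chosen so that for \<open>A = \<parallel>u\<parallel>\<^sub>r\<close> and \<open>B = \<parallel>v\<parallel>\<^sub>s\<close> the two integrated terms
  become \<open>A B / r\<close> and \<open>A B / s\<close>.\<close>

lemma Youngs_inequality_scaled:
  fixes A B a b r s :: real
  assumes A: "0 < A" and B: "0 < B" and a: "0 \<le> a" and b: "0 \<le> b"
    and r: "1 < r" and s: "s = r / (r - 1)"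
  shows "a * b \<le> B / (r * A powr (r - 1)) * a powr r + A / (s * B powr (s - 1)) * b powr s"
proof -
  have s1: "1 < s" using r unfolding s by (auto simp: less_divide_eq)
  have rs: "1 / r + 1 / s = 1" using r unfolding s by (simp add: field_simps)
  have "(a / A) * (b / B) \<le> (a / A) powr r / r + (b / B) powr s / s"
    using Youngs_inequality[of r s "a / A" "b / B"] r s1 rs A B a b by simp
  then have "A * B * ((a / A) * (b / B)) \<le> A * B * ((a / A) powr r / r + (b / B) powr s / s)"
    using A B by (intro mult_left_mono) auto
  also have "A * B * ((a / A) * (b / B)) = a * b" using A B by simp
  also have "A * B * ((a / A) powr r / r + (b / B) powr s / s)
     = B / (r * A powr (r - 1)) * a powr r + A / (s * B powr (s - 1)) * b powr s"
    using A B a b r s1 by (simp add: powr_divide powr_diff field_simps)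
  finally show ?thesis .
qed

lemma ennreal_mult_le_Young:
  fixes x y :: ennreal
  assumes A: "0 < A" and B: "0 < B" and r: "1 < r" and s: "s = r / (r - 1)"
  shows "x * y \<le> ennreal (B / (r * A powr (r - 1))) * epowr x r
                   + ennreal (A / (s * B powr (s - 1))) * epowr y s"
proof (cases "x = \<top> \<or> y = \<top>")
  case True
  have "0 < B / (r * A powr (r - 1))" "0 < A / (s * B powr (s - 1))"
    using A B r unfolding s by auto
  with True show ?thesis by (auto simp: ennreal_mult_top ennreal_top_mult)
next
  case False
  then obtain a b where ab: "x = ennreal a" "0 \<le> a" "y = ennreal b" "0 \<le> b"
    by (cases x; cases y) auto
  define c1 where "c1 = B / (r * A powr (r - 1))"
  define c2 where "c2 = A / (s * B powr (s - 1))"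
  have c: "0 \<le> c1" "0 \<le> c2" using A B r unfolding s c1_def c2_def by auto
  have "ennreal (a * b) \<le> ennreal (c1 * a powr r + c2 * b powr s)"
    unfolding c1_def c2_def by (intro ennreal_leI Youngs_inequality_scaled[OF A B ab(2,4) r s])
  also have "\<dots> = ennreal c1 * ennreal (a powr r) + ennreal c2 * ennreal (b powr s)"
    using c by (simp add: ennreal_plus ennreal_mult)
  finally show ?thesis
    using ab by (simp add: c1_def c2_def epowr_ennreal ennreal_mult)
qed

lemma nn_Lnorm_Hoelder:
  assumes r: "1 < r" and u: "u \<in> borel_measurable M" and v: "v \<in> borel_measurable M"
  shows "(\<integral>\<^sup>+x. u x * v x \<partial>M) \<le> nn_Lnorm M r u * nn_Lnorm M (r / (r - 1)) v"
proof -
  define s where "s = r / (r - 1)"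
  have s1: "1 < s" using r unfolding s_def by (auto simp: less_divide_eq)
  consider "nn_Lnorm M r u = 0 \<or> nn_Lnorm M s v = 0"
    | "nn_Lnorm M r u \<noteq> 0" "nn_Lnorm M s v \<noteq> 0" "nn_Lnorm M r u = \<top> \<or> nn_Lnorm M s v = \<top>"
    | A B where "nn_Lnorm M r u = ennreal A" "0 < A" "nn_Lnorm M s v = ennreal B" "0 < B"
    by (metis nn_Lnorm_cases)
  then show ?thesis
  proof cases
    case 1
    then have "(AE x in M. u x = 0) \<or> (AE x in M. v x = 0)"
      using AE_zero_of_nn_Lnorm_eq_0[OF _ _ u] AE_zero_of_nn_Lnorm_eq_0[OF _ _ v] r s1 by force
    then have "AE x in M. u x * v x = 0"
      by (auto elim!: eventually_mono)
    then show ?thesis using u v by (subst nn_integral_0_iff_AE[THEN iffD2]) auto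
  next
    case 2
    then show ?thesis by (auto simp: s_def ennreal_mult_top ennreal_top_mult)
  next
    case 3
    define c1 where "c1 = B / (r * A powr (r - 1))"
    define c2 where "c2 = A / (s * B powr (s - 1))"
    have c: "0 \<le> c1" "0 \<le> c2" using 3 r s1 by (auto simp: c1_def c2_def)
    have "(\<integral>\<^sup>+x. u x * v x \<partial>M)
        \<le> (\<integral>\<^sup>+x. ennreal c1 * epowr (u x) r + ennreal c2 * epowr (v x) s \<partial>M)"
      unfolding c1_def c2_def
      by (intro nn_integral_mono ennreal_mult_le_Young) (use 3 r s_def in auto)
    also have "\<dots> = ennreal c1 * epowr (nn_Lnorm M r u) r + ennreal c2 * epowr (nn_Lnorm M s v) s"
      using u v r s1 by (simp add: nn_integral_add nn_integral_cmult nn_integral_epowr_eq_nn_Lnorm)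
    also have "\<dots> = ennreal (c1 * A powr r + c2 * B powr s)"
      using c 3 by (simp add: epowr_ennreal ennreal_mult ennreal_plus[symmetric])
    also have "c1 * A powr r + c2 * B powr s = A * B * (1 / r + 1 / s)"
      using 3 r s1 by (simp add: c1_def c2_def powr_diff field_simps)
    also have "1 / r + 1 / s = 1" using r by (simp add: s_def field_simps)
    finally show ?thesis using 3 by (simp add: s_def ennreal_mult)
  qed
qed

lemma powr_add_le_weighted_pos:
  fixes x y A B r :: real
  assumes x: "0 < x" and y: "0 < y" and A: "0 < A" and B: "0 < B" and r: "1 \<le> r"
  shows "(x + y) powr r \<le> (A + B) powr (r - 1) * (A powr (1 - r) * x powr r + B powr (1 - r) * y powr r)"
proof -
  define t where "t = B / (A + B)"
  have t0: "0 \<le> t" "t \<le> 1" using A B by (auto simp: t_def)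
  have 1: "1 - t = A / (A + B)" using A B by (simp add: t_def field_simps)
  have "((1 - t) *\<^sub>R (x / A) + t *\<^sub>R (y / B)) powr r \<le> (1 - t) * (x / A) powr r + t * (y / B) powr r"
    using convex_onD[OF powr_convex[OF r], of t "x / A" "y / B"] t0 x y A B by auto
  also have "(1 - t) *\<^sub>R (x / A) + t *\<^sub>R (y / B) = (x + y) / (A + B)"
  proof -
    have "(1 - t) *\<^sub>R (x / A) = x / (A + B)" using A B by (simp add: 1)
    moreover have "t *\<^sub>R (y / B) = y / (A + B)" using A B by (simp add: t_def)
    ultimately show ?thesis by (simp add: add_divide_distrib)
  qed
  also have "(1 - t) * (x / A) powr r + t * (y / B) powr r = A / (A + B) * (x powr r / A powr r) + B / (A + B) * (y powr r / B powr r)"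
  proof -
    have d1: "(x / A) powr r = x powr r / A powr r" using x A by (simp add: powr_divide)
    have d2: "(y / B) powr r = y powr r / B powr r" using y B by (simp add: powr_divide)
    show ?thesis unfolding 1 d1 d2 by (simp add: t_def)
  qed
  finally have *: "((x + y) / (A + B)) powr r \<le> A / (A + B) * (x powr r / A powr r) + B / (A + B) * (y powr r / B powr r)" .
  have "(x + y) powr r = (A + B) powr r * ((x + y) / (A + B)) powr r"
    using x y A B by (simp add: powr_divide)
  also have "\<dots> \<le> (A + B) powr r * (A / (A + B) * (x powr r / A powr r) + B / (A + B) * (y powr r / B powr r))"
    using * by (intro mult_left_mono) auto
  also have "\<dots> = (A + B) powr (r - 1) * (A powr (1 - r) * x powr r + B powr (1 - r) * y powr r)"
  proof -
    define P where "P = (A + B) powr (r - 1)"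
    have e1: "A powr (1 - r) = A / A powr r" using powr_diff[of A 1 r] A by simp
    have e2: "B powr (1 - r) = B / B powr r" using powr_diff[of B 1 r] B by simp
    have e3: "(A + B) powr r = (A + B) * P" unfolding P_def using A B by (simp add: powr_diff)
    have p: "0 < A powr r" "0 < B powr r" "0 < A + B" using A B by auto
    have gen: "\<And>S P u v. S \<noteq> 0 \<Longrightarrow> S * P * (A / S * u + B / S * v) = P * (A * u + B * v)"
      by (simp add: field_simps)
    show ?thesis unfolding P_def[symmetric] e1 e2 e3
      using gen[of "A + B" P "x powr r / A powr r" "y powr r / B powr r"] p by simp
  qed
  finally show ?thesis .
qed

lemma powr_add_le_weighted:
  fixes x y A B r :: real
  assumes x: "0 \<le> x" and y: "0 \<le> y" and A: "0 < A" and B: "0 < B" and r: "1 \<le> r"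
  shows "(x + y) powr r \<le> (A + B) powr (r - 1) * (A powr (1 - r) * x powr r + B powr (1 - r) * y powr r)"
proof -
  have key: "1 \<le> (A + B) powr (r - 1) * C powr (1 - r)" if "C = A \<or> C = B" for C
  proof -
    have C: "0 < C" "C \<le> A + B" using that A B by auto
    have "C powr (r - 1) \<le> (A + B) powr (r - 1)" using C r by (intro powr_mono2) auto
    then have "C powr (1 - r) * C powr (r - 1) \<le> C powr (1 - r) * (A + B) powr (r - 1)"
      by (intro mult_left_mono) auto
    moreover have "C powr (1 - r) * C powr (r - 1) = 1" using C by (simp add: powr_add[symmetric])
    ultimately show ?thesis by (simp add: mult.commute)
  qed
  have nn: "0 \<le> (A + B) powr (r - 1) * (A powr (1 - r) * x powr r)" "0 \<le> (A + B) powr (r - 1) * (B powr (1 - r) * y powr r)"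
    by auto
  consider "x = 0" | "y = 0" | "0 < x" "0 < y" using x y by linarith
  then show ?thesis
  proof cases
    case 1
    have "1 * y powr r \<le> ((A + B) powr (r - 1) * B powr (1 - r)) * y powr r"
      by (rule mult_right_mono) (use key[of B] in auto)
    then show ?thesis using 1 r nn by (simp add: algebra_simps)
  next
    case 2
    have "1 * x powr r \<le> ((A + B) powr (r - 1) * A powr (1 - r)) * x powr r"
      by (rule mult_right_mono) (use key[of A] in auto)
    then show ?thesis using 2 r nn by (simp add: algebra_simps)
  next
    case 3
    then show ?thesis using powr_add_le_weighted_pos A B r by blast
  qed
qed

lemma epowr_add_le_weighted:
  fixes x y :: ennreal
  assumes A: "0 < A" and B: "0 < B" and r: "1 \<le> r"
  shows "epowr (x + y) r \<le> ennreal ((A + B) powr (r - 1))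
           * (ennreal (A powr (1 - r)) * epowr x r + ennreal (B powr (1 - r)) * epowr y r)"
proof (cases "x = \<top> \<or> y = \<top>")
  case True
  have "ennreal ((A + B) powr (r - 1)) \<noteq> 0" "ennreal (A powr (1 - r)) \<noteq> 0"
    "ennreal (B powr (1 - r)) \<noteq> 0"
    using A B by auto
  with True show ?thesis by (auto simp: ennreal_mult_top)
next
  case False
  then obtain a b where ab: "x = ennreal a" "0 \<le> a" "y = ennreal b" "0 \<le> b"
    by (cases x; cases y) auto
  define C where "C = (A + B) powr (r - 1)"
  define c1 where "c1 = A powr (1 - r)"
  define c2 where "c2 = B powr (1 - r)"
  have "ennreal ((a + b) powr r) \<le> ennreal (C * (c1 * a powr r + c2 * b powr r))"
    unfolding C_def c1_def c2_def by (intro ennreal_leI powr_add_le_weighted[OF ab(2,4) A B r])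
  also have "\<dots> = ennreal C * (ennreal c1 * ennreal (a powr r) + ennreal c2 * ennreal (b powr r))"
    by (simp add: C_def c1_def c2_def ennreal_plus ennreal_mult)
  moreover have "epowr (x + y) r = ennreal ((a + b) powr r)"
    using ab by (simp add: epowr_ennreal flip: ennreal_plus)
  moreover have "epowr x r = ennreal (a powr r)" "epowr y r = ennreal (b powr r)"
    using ab by (simp_all add: epowr_ennreal)
  ultimately show ?thesis
    unfolding C_def c1_def c2_def by simp
qed

text \<open>Integrating \<open>epowr_add_le_weighted\<close> with \<open>A = \<parallel>u\<parallel>\<^sub>r\<close> and \<open>B = \<parallel>v\<parallel>\<^sub>r\<close> gives \<open>(A + B)\<^sup>r\<close>.\<close>

lemma nn_Lnorm_add_le:
  assumes r: "1 \<le> r" and u: "u \<in> borel_measurable M" and v: "v \<in> borel_measurable M"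
  shows "nn_Lnorm M r (\<lambda>x. u x + v x) \<le> nn_Lnorm M r u + nn_Lnorm M r v"
proof -
  consider "nn_Lnorm M r u = \<top> \<or> nn_Lnorm M r v = \<top>" | "nn_Lnorm M r u = 0" | "nn_Lnorm M r v = 0"
    | A B where "nn_Lnorm M r u = ennreal A" "0 < A" "nn_Lnorm M r v = ennreal B" "0 < B"
    by (metis nn_Lnorm_cases)
  then show ?thesis
  proof cases
    case 1
    then show ?thesis by auto
  next
    case 2
    then have "AE x in M. u x = 0" using AE_zero_of_nn_Lnorm_eq_0[OF _ _ u] r by auto
    then have "nn_Lnorm M r (\<lambda>x. u x + v x) = nn_Lnorm M r v"
      by (intro nn_Lnorm_cong_AE) (auto elim!: eventually_mono)
    then show ?thesis by simp
  next
    case 3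
    then have "AE x in M. v x = 0" using AE_zero_of_nn_Lnorm_eq_0[OF _ _ v] r by auto
    then have "nn_Lnorm M r (\<lambda>x. u x + v x) = nn_Lnorm M r u"
      by (intro nn_Lnorm_cong_AE) (auto elim!: eventually_mono)
    then show ?thesis by simp
  next
    case 4
    define C where "C = (A + B) powr (r - 1)"
    define c1 where "c1 = A powr (1 - r)"
    define c2 where "c2 = B powr (1 - r)"
    have "(\<integral>\<^sup>+x. epowr (u x + v x) r \<partial>M)
        \<le> (\<integral>\<^sup>+x. ennreal C * (ennreal c1 * epowr (u x) r + ennreal c2 * epowr (v x) r) \<partial>M)"
      unfolding C_def c1_def c2_def
      by (intro nn_integral_mono epowr_add_le_weighted) (use 4 r in auto)
    also have "\<dots> = ennreal C * (ennreal c1 * epowr (nn_Lnorm M r u) r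
                                 + ennreal c2 * epowr (nn_Lnorm M r v) r)"
      using u v r by (simp add: nn_integral_add nn_integral_cmult nn_integral_epowr_eq_nn_Lnorm)
    also have "\<dots> = ennreal (C * (c1 * A powr r + c2 * B powr r))"
      using 4 by (simp add: C_def c1_def c2_def epowr_ennreal ennreal_mult ennreal_plus)
    also have "C * (c1 * A powr r + c2 * B powr r) = (A + B) powr r"
    proof -
      have "c1 * A powr r = A" "c2 * B powr r = B"
        using 4 by (simp_all add: c1_def c2_def powr_add[symmetric])
      moreover have "(A + B) powr (r - 1) * (A + B) = (A + B) powr r"
        using 4 by (simp add: powr_diff)
      ultimately show ?thesis unfolding C_def by (simp add: distrib_left)
    qed
    finally have "nn_Lnorm M r (\<lambda>x. u x + v x) \<le> epowr (ennreal ((A + B) powr r)) (1 / r)"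
      unfolding nn_Lnorm_def using r by (intro epowr_mono) auto
    also have "\<dots> = nn_Lnorm M r u + nn_Lnorm M r v"
      using 4 r by (simp add: epowr_ennreal powr_powr ennreal_plus)
    finally show ?thesis .
  qed
qed

lemma nn_Lnorm_sum_le:
  assumes r: "1 \<le> r" and u: "\<And>i. i \<in> I \<Longrightarrow> u i \<in> borel_measurable M"
  shows "nn_Lnorm M r (\<lambda>x. \<Sum>i\<in>I. u i x) \<le> (\<Sum>i\<in>I. nn_Lnorm M r (u i))"
  using u
proof (induction I rule: infinite_finite_induct)
  case (insert i I)
  have "nn_Lnorm M r (\<lambda>x. \<Sum>i\<in>insert i I. u i x) = nn_Lnorm M r (\<lambda>x. u i x + (\<Sum>i\<in>I. u i x))"
    using insert by simp
  also have "\<dots> \<le> nn_Lnorm M r (u i) + nn_Lnorm M r (\<lambda>x. \<Sum>i\<in>I. u i x)"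
    using insert r by (intro nn_Lnorm_add_le) auto
  also have "\<dots> \<le> nn_Lnorm M r (u i) + (\<Sum>i\<in>I. nn_Lnorm M r (u i))"
    using insert by (intro add_left_mono) auto
  finally show ?case using insert by simp
qed (use r in \<open>simp_all add: nn_Lnorm_def\<close>)

section \<open>Minkowski's integral inequality\<close>

lemma borel_measurable_nn_Lnorm_section:
  assumes "sigma_finite_measure P" "(\<lambda>(\<omega>, s). G \<omega> s) \<in> borel_measurable (P \<Otimes>\<^sub>M S)"
  shows "(\<lambda>s. nn_Lnorm P r (\<lambda>\<omega>. G \<omega> s)) \<in> borel_measurable S"
proof -
  have "(\<lambda>(s, \<omega>). epowr (G \<omega> s) r) \<in> borel_measurable (S \<Otimes>\<^sub>M P)"
    using measurable_pair_swap[OF assms(2)] by (simp add: case_prod_beta')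
  from sigma_finite_measure.borel_measurable_nn_integral[OF assms(1) this]
  show ?thesis unfolding nn_Lnorm_def by (intro measurable_epowr) simp
qed

lemma SUP_epowr_min_of_nat:
  assumes r: "1 \<le> r"
  shows "(SUP n. epowr (min x (of_nat n)) r) = epowr x r"
proof (rule antisym)
  show "(SUP n. epowr (min x (of_nat n)) r) \<le> epowr x r"
    using r by (intro SUP_least epowr_mono) auto
next
  show "epowr x r \<le> (SUP n. epowr (min x (of_nat n)) r)"
  proof (cases x)
    case (real a)
    obtain n where "a \<le> real n" using real_arch_simple by blast
    then have "min x (of_nat n) = x"
      using real by (simp add: ennreal_of_nat_eq_real_of_nat ennreal_leI)
    then show ?thesis by (intro SUP_upper2[of n]) auto
  next
    case top
    have "real n \<le> real n powr r" for n
    proof (cases "n = 0")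
      case False
      then have "real n powr 1 \<le> real n powr r" using r by (intro powr_mono) auto
      then show ?thesis using False by simp
    qed simp
    then have "(of_nat n :: ennreal) \<le> epowr (min x (of_nat n)) r" for n
      using top by (simp add: epowr_ennreal ennreal_of_nat_eq_real_of_nat ennreal_leI)
    then have "(SUP n. (of_nat n :: ennreal)) \<le> (SUP n. epowr (min x (of_nat n)) r)"
      by (intro SUP_mono) auto
    then show ?thesis using top by (simp add: ennreal_SUP_of_nat_eq_top)
  qed
qed

text \<open>The truncation keeps the left-hand side finite, so that it can be divided out below.\<close>

lemma nn_integral_truncated_Minkowski_le:
  fixes n :: nat
  assumes P: "finite_measure P" and S: "sigma_finite_measure S" and r: "1 < r"
    and H: "(\<lambda>(\<omega>, s). H \<omega> s) \<in> borel_measurable (P \<Otimes>\<^sub>M S)"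
  defines "I \<equiv> \<integral>\<^sup>+\<omega>. epowr (min (\<integral>\<^sup>+s. H \<omega> s \<partial>S) (of_nat n)) r \<partial>P"
  shows "I \<le> (\<integral>\<^sup>+s. nn_Lnorm P r (\<lambda>\<omega>. H \<omega> s) \<partial>S) * epowr I ((r - 1) / r)"
proof -
  interpret P: finite_measure P by fact
  interpret S: sigma_finite_measure S by fact
  interpret PS: pair_sigma_finite P S
    using P.sigma_finite_measure S by (simp add: pair_sigma_finite_def)
  have [measurable]: "(\<lambda>x. H (fst x) (snd x)) \<in> borel_measurable (P \<Otimes>\<^sub>M S)"
    using H by (simp add: case_prod_beta')
  define \<Phi> where "\<Phi> \<omega> = min (\<integral>\<^sup>+s. H \<omega> s \<partial>S) (of_nat n)" for \<omega>
  have [measurable]: "\<Phi> \<in> borel_measurable P"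
    unfolding \<Phi>_def using S.borel_measurable_nn_integral[OF H] by measurable
  define s' where "s' = r / (r - 1)"
  have "I \<le> (\<integral>\<^sup>+\<omega>. epowr (\<Phi> \<omega>) (r - 1) * (\<integral>\<^sup>+s. H \<omega> s \<partial>S) \<partial>P)"
    unfolding I_def \<Phi>_def[symmetric]
  proof (intro nn_integral_mono)
    fix \<omega>
    have "epowr (\<Phi> \<omega>) r = epowr (\<Phi> \<omega>) (r - 1) * epowr (\<Phi> \<omega>) 1"
      using epowr_add_exp[of "r - 1" 1 "\<Phi> \<omega>"] r by simp
    also have "\<dots> \<le> epowr (\<Phi> \<omega>) (r - 1) * (\<integral>\<^sup>+s. H \<omega> s \<partial>S)"
      by (intro mult_left_mono) (auto simp: \<Phi>_def)
    finally show "epowr (\<Phi> \<omega>) r \<le> epowr (\<Phi> \<omega>) (r - 1) * (\<integral>\<^sup>+s. H \<omega> s \<partial>S)" .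
  qed
  also have "\<dots> = (\<integral>\<^sup>+\<omega>. (\<integral>\<^sup>+s. H \<omega> s * epowr (\<Phi> \<omega>) (r - 1) \<partial>S) \<partial>P)"
    using measurable_Pair2[OF H]
    by (intro nn_integral_cong) (simp add: nn_integral_multc mult.commute)
  also have "\<dots> = (\<integral>\<^sup>+s. (\<integral>\<^sup>+\<omega>. H \<omega> s * epowr (\<Phi> \<omega>) (r - 1) \<partial>P) \<partial>S)"
    using PS.Fubini'[of "\<lambda>\<omega> s. H \<omega> s * epowr (\<Phi> \<omega>) (r - 1)"] by simp
  also have "\<dots> \<le> (\<integral>\<^sup>+s. nn_Lnorm P r (\<lambda>\<omega>. H \<omega> s) * nn_Lnorm P s' (\<lambda>\<omega>. epowr (\<Phi> \<omega>) (r - 1)) \<partial>S)"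
    using measurable_Pair1[OF H] unfolding s'_def
    by (intro nn_integral_mono nn_Lnorm_Hoelder[OF r]) auto
  also have "\<dots> = (\<integral>\<^sup>+s. nn_Lnorm P r (\<lambda>\<omega>. H \<omega> s) \<partial>S) * nn_Lnorm P s' (\<lambda>\<omega>. epowr (\<Phi> \<omega>) (r - 1))"
    using borel_measurable_nn_Lnorm_section[OF P.sigma_finite_measure H]
    by (rule nn_integral_multc)
  also have "nn_Lnorm P s' (\<lambda>\<omega>. epowr (\<Phi> \<omega>) (r - 1)) = epowr I ((r - 1) / r)"
    using r by (simp add: nn_Lnorm_def epowr_epowr I_def \<Phi>_def s'_def)
  finally show ?thesis .
qed

lemma le_powr_of_le_mult_powr:
  fixes i w r :: real
  assumes "0 \<le> i" "1 < r" "i \<le> w * i powr ((r - 1) / r)"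
  shows "i \<le> w powr r"
proof (cases "i = 0")
  case False
  then have i: "0 < i" using assms by simp
  have "i powr (1 / r) * i powr ((r - 1) / r) \<le> w * i powr ((r - 1) / r)"
    using assms i by (simp add: powr_add[symmetric] add_divide_distrib[symmetric])
  then have "i powr (1 / r) \<le> w" using i by (simp add: mult_le_cancel_right)
  then have "(i powr (1 / r)) powr r \<le> w powr r" using i assms by (intro powr_mono2) auto
  then show ?thesis using i assms by (simp add: powr_powr)
qed simp

theorem nn_Lnorm_nn_integral_le:
  assumes P: "finite_measure P" and S: "sigma_finite_measure S" and r: "1 \<le> r"
    and H: "(\<lambda>(\<omega>, s). H \<omega> s) \<in> borel_measurable (P \<Otimes>\<^sub>M S)"
  shows "nn_Lnorm P r (\<lambda>\<omega>. \<integral>\<^sup>+s. H \<omega> s \<partial>S) \<le> (\<integral>\<^sup>+s. nn_Lnorm P r (\<lambda>\<omega>. H \<omega> s) \<partial>S)"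
    (is "nn_Lnorm P r ?\<Phi> \<le> ?W")
proof -
  interpret P: finite_measure P by fact
  interpret S: sigma_finite_measure S by fact
  interpret PS: pair_sigma_finite P S
    using P.sigma_finite_measure S by (simp add: pair_sigma_finite_def)
  have [measurable]: "?\<Phi> \<in> borel_measurable P"
    by (rule S.borel_measurable_nn_integral[OF H])
  consider "r = 1" | "?W = \<top>" | w where "1 < r" "?W = ennreal w" "0 \<le> w"
    using r by (cases ?W) force+
  then show ?thesis
  proof cases
    case 1
    then show ?thesis using PS.Fubini'[OF H] by (simp add: nn_Lnorm_def)
  next
    case 3
    have "(\<integral>\<^sup>+\<omega>. epowr (min (?\<Phi> \<omega>) (of_nat n)) r \<partial>P) \<le> ennreal (w powr r)" for n
    proof -
      define I where "I = (\<integral>\<^sup>+\<omega>. epowr (min (?\<Phi> \<omega>) (of_nat n)) r \<partial>P)"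
      have "I \<le> (\<integral>\<^sup>+\<omega>. ennreal (real n powr r) \<partial>P)"
        unfolding I_def using r
        by (intro nn_integral_mono) (auto simp: epowr_of_nat[symmetric] intro!: epowr_mono)
      also have "\<dots> < \<top>"
        using P.emeasure_finite[of "space P"] by (simp add: ennreal_mult_eq_top_iff less_top[symmetric])
      finally obtain i where i: "I = ennreal i" "0 \<le> i" by (cases I) auto
      have "I \<le> ennreal w * epowr I ((r - 1) / r)"
        using nn_integral_truncated_Minkowski_le[OF P S 3(1) H, of n] 3 by (simp add: I_def)
      then have "i \<le> w * i powr ((r - 1) / r)"
        using i 3 by (simp add: epowr_ennreal ennreal_mult[symmetric] ennreal_le_iff)
      then show ?thesis
        using le_powr_of_le_mult_powr[OF i(2) 3(1)] i by (simp add: I_def ennreal_leI)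
    qed
    then have "(SUP n. \<integral>\<^sup>+\<omega>. epowr (min (?\<Phi> \<omega>) (of_nat n)) r \<partial>P) \<le> ennreal (w powr r)"
      by (rule SUP_least)
    also have "(SUP n. \<integral>\<^sup>+\<omega>. epowr (min (?\<Phi> \<omega>) (of_nat n)) r \<partial>P) = (\<integral>\<^sup>+\<omega>. epowr (?\<Phi> \<omega>) r \<partial>P)"
      using r by (subst nn_integral_monotone_convergence_SUP[symmetric])
        (auto simp: incseq_def le_fun_def SUP_epowr_min_of_nat intro!: epowr_mono min.mono)
    finally have "nn_Lnorm P r ?\<Phi> \<le> epowr (ennreal (w powr r)) (1 / r)"
      unfolding nn_Lnorm_def using r by (intro epowr_mono) auto
    also have "\<dots> = ?W" using 3 by (simp add: epowr_ennreal powr_powr)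
    finally show ?thesis .
  qed simp
qed

text \<open>Minkowski's integral inequality for the exponent \<open>q / p\<close>, applied to \<open>G\<^sup>p\<close>.\<close>

lemma nn_Lnorm_swap_le:
  fixes p q :: real and P :: "'w measure" and S :: "'s measure" and G :: "'w \<Rightarrow> 's \<Rightarrow> ennreal"
  assumes P: "finite_measure P" and S: "sigma_finite_measure S" and p: "1 \<le> p" "p \<le> q"
    and G: "(\<lambda>(\<omega>, s). G \<omega> s) \<in> borel_measurable (P \<Otimes>\<^sub>M S)"
  shows "nn_Lnorm P q (\<lambda>\<omega>. nn_Lnorm S p (G \<omega>)) \<le> nn_Lnorm S p (\<lambda>s. nn_Lnorm P q (\<lambda>\<omega>. G \<omega> s))"
proof -
  define r where "r = q / p"
  have r: "1 \<le> r" using p by (simp add: r_def)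
  have p0: "0 < p" and q0: "0 < q" using p by auto
  define H where "H \<omega> s = epowr (G \<omega> s) p" for \<omega> s
  have H: "(\<lambda>(\<omega>, s). H \<omega> s) \<in> borel_measurable (P \<Otimes>\<^sub>M S)"
    using G unfolding H_def by (simp add: case_prod_beta' measurable_epowr)
  have lhs: "nn_Lnorm P q (\<lambda>\<omega>. nn_Lnorm S p (G \<omega>)) = epowr (nn_Lnorm P r (\<lambda>\<omega>. \<integral>\<^sup>+s. H \<omega> s \<partial>S)) (1 / p)"
  proof -
    have "nn_Lnorm P q (\<lambda>\<omega>. nn_Lnorm S p (G \<omega>)) = epowr (\<integral>\<^sup>+\<omega>. epowr (\<integral>\<^sup>+s. H \<omega> s \<partial>S) r \<partial>P) (1 / q)"
      using p0 q0 by (simp add: nn_Lnorm_def H_def epowr_epowr r_def)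
    also have "\<dots> = epowr (nn_Lnorm P r (\<lambda>\<omega>. \<integral>\<^sup>+s. H \<omega> s \<partial>S)) (1 / p)"
      using p0 q0 by (simp add: nn_Lnorm_def epowr_epowr r_def)
    finally show ?thesis .
  qed
  have rhs: "nn_Lnorm S p (\<lambda>s. nn_Lnorm P q (\<lambda>\<omega>. G \<omega> s)) = epowr (\<integral>\<^sup>+s. nn_Lnorm P r (\<lambda>\<omega>. H \<omega> s) \<partial>S) (1 / p)"
  proof -
    have "epowr (nn_Lnorm P q (\<lambda>\<omega>. G \<omega> s)) p = nn_Lnorm P r (\<lambda>\<omega>. H \<omega> s)" for s
    proof -
      have "epowr (nn_Lnorm P q (\<lambda>\<omega>. G \<omega> s)) p = epowr (\<integral>\<^sup>+\<omega>. epowr (G \<omega> s) q \<partial>P) (1 / r)"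
        using p0 q0 by (simp add: nn_Lnorm_def epowr_epowr r_def)
      also have "(\<lambda>\<omega>. epowr (G \<omega> s) q) = (\<lambda>\<omega>. epowr (H \<omega> s) r)"
        using p0 q0 by (simp add: H_def epowr_epowr r_def)
      finally show ?thesis by (simp add: nn_Lnorm_def)
    qed
    then show ?thesis by (simp add: nn_Lnorm_def)
  qed
  show ?thesis unfolding lhs rhs
    using nn_Lnorm_nn_integral_le[OF P S r H] p0 by (intro epowr_mono) auto
qed

section \<open>A second-order expansion of \<open>\<bar>a + b\<bar> powr q\<close>\<close>

definition powr_expansion_const :: "real \<Rightarrow> real" where
  "powr_expansion_const q = q * (q - 1) * 2 powr q"

text \<open>\<open>q * signed_powr q a\<close> is the derivative of \<open>\<bar>a\<bar> powr q\<close>.\<close>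

definition signed_powr :: "real \<Rightarrow> real \<Rightarrow> real" where
  "signed_powr q a = sgn a * \<bar>a\<bar> powr (q - 1)"

lemma abs_signed_powr: "\<bar>signed_powr q x\<bar> \<le> \<bar>x\<bar> powr (q - 1)"
  unfolding signed_powr_def by (cases "x = 0") (simp_all add: abs_mult sgn_if)

lemma signed_powr_measurable[measurable]: "signed_powr q \<in> borel_measurable borel"
  unfolding signed_powr_def by measurable

lemma powr_expansion_const_ge:
  assumes "2 \<le> q"
  shows "1 \<le> powr_expansion_const q" "q \<le> powr_expansion_const q"
proof -
  have "4 \<le> 2 powr q" using assms powr_mono[of 2 q 2] by simp
  then have "1 * 4 \<le> (q - 1) * 2 powr q" using assms by (intro mult_mono) auto
  then have "q * 1 \<le> q * ((q - 1) * 2 powr q)" using assms by (intro mult_left_mono) auto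
  then show "q \<le> powr_expansion_const q" by (simp add: powr_expansion_const_def mult.assoc)
  then show "1 \<le> powr_expansion_const q" using assms by linarith
qed

lemma powr_add_le_2_powr:
  fixes u v e :: real
  assumes "0 < u" "0 \<le> v" "0 \<le> e"
  shows "(u + v) powr e \<le> 2 powr e * (u powr e + v powr e)"
proof -
  have "(u + v) powr e \<le> (2 * max u v) powr e"
    using assms by (intro powr_mono2) auto
  also have "\<dots> = 2 powr e * max u v powr e" using assms by (simp add: powr_mult)
  also have "\<dots> \<le> 2 powr e * (u powr e + v powr e)"
    by (intro mult_left_mono) (auto simp: max_def)
  finally show ?thesis .
qed

lemma powr_Taylor_2:
  fixes x y q :: real
  assumes x: "0 < x" and y: "0 < y" and xy: "y \<noteq> x"
  obtains t where "0 < t" "t \<le> x + \<bar>y - x\<bar>"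
    "y powr q = x powr q + q * x powr (q - 1) * (y - x) + q * (q - 1) * t powr (q - 2) / 2 * (y - x)\<^sup>2"
proof -
  define d where "d = (\<lambda>m::nat. if m = 0 then (\<lambda>t::real. t powr q)
      else if m = 1 then (\<lambda>t. q * t powr (q - 1)) else (\<lambda>t. q * (q - 1) * t powr (q - 2)))"
  have "DERIV (d m) t :> d (Suc m) t" if "m < 2" "min x y \<le> t" "t \<le> max x y" for m t
  proof -
    have t: "0 < t" using that x y by (auto simp: min_def split: if_splits)
    have "DERIV (\<lambda>t. q * t powr (q - 1)) t :> q * ((q - 1) * t powr (q - 2))"
      using DERIV_cmult[OF has_real_derivative_powr[OF t, of "q - 1"], of q] by (simp add: algebra_simps)
    then show ?thesis
      using that has_real_derivative_powr[OF t, of q] by (cases m) (auto simp: d_def algebra_simps)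
  qed
  then obtain t where t: "if y < x then y < t \<and> t < x else x < t \<and> t < y"
    and eq: "d 0 y = (\<Sum>m<2. (d m x / fact m) * (y - x)^m) + (d 2 t / fact 2) * (y - x)^2"
    using Taylor[of 2 d "\<lambda>t. t powr q" "min x y" "max x y" x y] xy by (auto simp: d_def)
  show ?thesis
    using that[of t] t eq x y by (auto simp: d_def eval_nat_numeral split: if_splits)
qed

lemma powr_le_expansion:
  fixes x y q :: real
  assumes x: "0 < x" and y: "0 < y" and q: "2 \<le> q"
  shows "y powr q \<le> x powr q + q * x powr (q - 1) * (y - x)
      + powr_expansion_const q * (x powr (q - 2) * (y - x)\<^sup>2 + \<bar>y - x\<bar> powr q)"
proof (cases "y = x")
  case True
  then show ?thesis using powr_expansion_const_ge[OF q] by simp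
next
  case False
  obtain t where t: "0 < t" "t \<le> x + \<bar>y - x\<bar>"
    and eq: "y powr q = x powr q + q * x powr (q - 1) * (y - x) + q * (q - 1) * t powr (q - 2) / 2 * (y - x)\<^sup>2"
    using powr_Taylor_2[OF x y False] by blast
  have "t powr (q - 2) \<le> (x + \<bar>y - x\<bar>) powr (q - 2)" using t q by (intro powr_mono2) auto
  also have "\<dots> \<le> 2 powr (q - 2) * (x powr (q - 2) + \<bar>y - x\<bar> powr (q - 2))"
    using x q by (intro powr_add_le_2_powr) auto
  finally have "t powr (q - 2) * (y - x)\<^sup>2 \<le> 2 powr q * (x powr (q - 2) * (y - x)\<^sup>2 + \<bar>y - x\<bar> powr q)"
  proof -
    assume tb: "t powr (q - 2) \<le> 2 powr (q - 2) * (x powr (q - 2) + \<bar>y - x\<bar> powr (q - 2))"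
    have "(y - x)\<^sup>2 = \<bar>y - x\<bar> powr 2" using False by (simp add: powr_realpow)
    then have "\<bar>y - x\<bar> powr (q - 2) * (y - x)\<^sup>2 = \<bar>y - x\<bar> powr q"
      using powr_add[of "\<bar>y - x\<bar>" "q - 2" 2] False by simp
    then have hq: "\<bar>y - x\<bar> powr (q - 2) * (y - x)\<^sup>2 = \<bar>y - x\<bar> powr q" .
    have "t powr (q - 2) * (y - x)\<^sup>2
        \<le> 2 powr (q - 2) * (x powr (q - 2) + \<bar>y - x\<bar> powr (q - 2)) * (y - x)\<^sup>2"
      using tb by (simp add: mult_right_mono)
    also have "\<dots> = 2 powr (q - 2) * (x powr (q - 2) * (y - x)\<^sup>2 + \<bar>y - x\<bar> powr (q - 2) * (y - x)\<^sup>2)"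
      by (simp add: algebra_simps)
    also have "\<dots> = 2 powr (q - 2) * (x powr (q - 2) * (y - x)\<^sup>2 + \<bar>y - x\<bar> powr q)"
      by (simp only: hq)
    also have "\<dots> \<le> 2 powr q * (x powr (q - 2) * (y - x)\<^sup>2 + \<bar>y - x\<bar> powr q)"
      by (intro mult_right_mono powr_mono) auto
    finally show ?thesis .
  qed
  moreover have "0 \<le> t powr (q - 2) * (y - x)\<^sup>2" by simp
  ultimately have "t powr (q - 2) * (y - x)\<^sup>2 / 2
      \<le> 2 powr q * (x powr (q - 2) * (y - x)\<^sup>2 + \<bar>y - x\<bar> powr q)"
    by linarith
  then have "q * (q - 1) * (t powr (q - 2) * (y - x)\<^sup>2 / 2)
      \<le> q * (q - 1) * (2 powr q * (x powr (q - 2) * (y - x)\<^sup>2 + \<bar>y - x\<bar> powr q))"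
    using q by (intro mult_left_mono) auto
  then show ?thesis
    using eq by (simp add: powr_expansion_const_def mult.assoc)
qed

lemma abs_add_powr_le_expansion_nonneg:
  fixes a b q :: real
  assumes a: "0 \<le> a" and q: "2 \<le> q"
  shows "\<bar>a + b\<bar> powr q \<le> \<bar>a\<bar> powr q + q * signed_powr q a * b
           + powr_expansion_const q * (\<bar>a\<bar> powr (q - 2) * b\<^sup>2 + \<bar>b\<bar> powr q)"
proof -
  define C where "C = powr_expansion_const q"
  have C: "1 \<le> C" "q \<le> C" using powr_expansion_const_ge[OF q] by (auto simp: C_def)
  have Cb: "\<bar>b\<bar> powr q \<le> C * \<bar>b\<bar> powr q" using mult_right_mono[OF C(1)] by simp
  consider "a = 0" | "0 < a" "0 < a + b" | "0 < a" "a + b \<le> 0" using a by linarith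
  then show ?thesis
  proof cases
    case 1
    then show ?thesis using Cb by (simp add: signed_powr_def C_def)
  next
    case 2
    then show ?thesis using powr_le_expansion[of a "a + b" q] q by (simp add: signed_powr_def C_def)
  next
    case 3
    then have ab: "a \<le> \<bar>b\<bar>" "\<bar>a + b\<bar> \<le> \<bar>b\<bar>" "b < 0" by auto
    have "a powr (q - 2) * (a * \<bar>b\<bar>) \<le> a powr (q - 2) * (\<bar>b\<bar> * \<bar>b\<bar>)"
      using ab 3 by (intro mult_left_mono mult_right_mono) auto
    moreover have "a powr (q - 1) = a powr (q - 2) * a" using powr_add[of a "q - 2" 1] 3 by simp
    ultimately have "q * (a powr (q - 1) * \<bar>b\<bar>) \<le> q * (a powr (q - 2) * b\<^sup>2)"
      using q by (intro mult_left_mono) (auto simp: mult.assoc power2_eq_square)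
    moreover have "q * signed_powr q a * b = - (q * (a powr (q - 1) * \<bar>b\<bar>))"
      using ab 3 by (simp add: signed_powr_def)
    moreover have "q * (a powr (q - 2) * b\<^sup>2) \<le> C * (a powr (q - 2) * b\<^sup>2)"
      using C by (intro mult_right_mono) auto
    moreover have "\<bar>a + b\<bar> powr q \<le> \<bar>b\<bar> powr q" using ab q by (intro powr_mono2) auto
    moreover have "C * (\<bar>a\<bar> powr (q - 2) * b\<^sup>2 + \<bar>b\<bar> powr q)
        = C * (a powr (q - 2) * b\<^sup>2) + C * \<bar>b\<bar> powr q"
      using 3 by (simp add: distrib_left)
    moreover have "0 \<le> \<bar>a\<bar> powr q" by simp
    ultimately have "\<bar>a + b\<bar> powr q \<le> \<bar>a\<bar> powr q + q * signed_powr q a * b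
        + C * (\<bar>a\<bar> powr (q - 2) * b\<^sup>2 + \<bar>b\<bar> powr q)"
      using Cb by linarith
    then show ?thesis by (simp add: C_def)
  qed
qed

lemma abs_add_powr_le_expansion:
  fixes a b q :: real
  assumes q: "2 \<le> q"
  shows "\<bar>a + b\<bar> powr q \<le> \<bar>a\<bar> powr q + q * signed_powr q a * b + powr_expansion_const q * (\<bar>a\<bar> powr (q - 2) * b\<^sup>2 + \<bar>b\<bar> powr q)"
proof (cases "0 \<le> a")
  case True then show ?thesis using abs_add_powr_le_expansion_nonneg q by blast
next
  case False
  have "\<bar>-a + -b\<bar> powr q \<le> \<bar>-a\<bar> powr q + q * signed_powr q (-a) * (-b) + powr_expansion_const q * (\<bar>-a\<bar> powr (q - 2) * (-b)\<^sup>2 + \<bar>-b\<bar> powr q)"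
    using False q by (intro abs_add_powr_le_expansion_nonneg) auto
  moreover have "\<bar>-a + -b\<bar> = \<bar>a + b\<bar>" by simp
  moreover have "signed_powr q (-a) = - signed_powr q a" by (simp add: signed_powr_def)
  ultimately show ?thesis by (simp add: algebra_simps)
qed


section \<open>Moment inequalities\<close>

lemma abs_powr_le_1_plus_abs_powr:
  fixes x e q :: real
  assumes "0 \<le> e" "e \<le> q"
  shows "\<bar>x\<bar> powr e \<le> 1 + \<bar>x\<bar> powr q"
proof (cases "\<bar>x\<bar> \<le> 1")
  case True
  then have "\<bar>x\<bar> powr e \<le> 1" using assms powr_mono2[of e "\<bar>x\<bar>" 1] by simp
  then show ?thesis using powr_ge_zero[of "\<bar>x\<bar>" q] by linarith
next
  case False
  then have "\<bar>x\<bar> powr e \<le> \<bar>x\<bar> powr q" using assms by (intro powr_mono) auto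
  then show ?thesis by simp
qed

lemma (in prob_space) integrable_bounded_by_abs_powr:
  fixes f g :: "'a \<Rightarrow> real"
  assumes f: "integrable M (\<lambda>x. \<bar>f x\<bar> powr q)" and g: "g \<in> borel_measurable M"
    and le: "\<And>x. \<bar>g x\<bar> \<le> \<bar>f x\<bar> powr e" and e: "0 \<le> e" "e \<le> q"
  shows "integrable M g"
proof (rule Bochner_Integration.integrable_bound[of _ "\<lambda>x. 1 + \<bar>f x\<bar> powr q"])
  show "integrable M (\<lambda>x. 1 + \<bar>f x\<bar> powr q)" using f by simp
  show "AE x in M. norm (g x) \<le> norm (1 + \<bar>f x\<bar> powr q)"
    using le abs_powr_le_1_plus_abs_powr[OF e] by (intro AE_I2) (smt (verit) real_norm_def powr_ge_zero)
qed (rule g)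

lemma (in prob_space) nn_integral_epowr_le_epowr_nn_integral:
  assumes t: "0 < t" "t \<le> 1" and u: "u \<in> borel_measurable M"
  shows "(\<integral>\<^sup>+x. epowr (u x) t \<partial>M) \<le> epowr (\<integral>\<^sup>+x. u x \<partial>M) t"
proof (cases "t = 1")
  case False
  then have r: "1 < 1 / t" using t by simp
  have "(\<integral>\<^sup>+x. epowr (u x) t * 1 \<partial>M)
      \<le> nn_Lnorm M (1 / t) (\<lambda>x. epowr (u x) t) * nn_Lnorm M (1 / t / (1 / t - 1)) (\<lambda>x. 1)"
    using u by (intro nn_Lnorm_Hoelder[OF r]) auto
  also have "nn_Lnorm M (1 / t / (1 / t - 1)) (\<lambda>x. 1) = 1"
    using t r by (intro nn_Lnorm_const) (simp add: field_simps)
  also have "nn_Lnorm M (1 / t) (\<lambda>x. epowr (u x) t) = epowr (\<integral>\<^sup>+x. u x \<partial>M) t"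
    using t by (simp add: nn_Lnorm_def epowr_epowr)
  finally show ?thesis by simp
qed simp

lemma (in prob_space) integral_abs_powr_le_moment_powr:
  fixes f :: "'a \<Rightarrow> real"
  assumes f: "f \<in> borel_measurable M" "integrable M (\<lambda>x. \<bar>f x\<bar> powr q)" and e: "0 \<le> e" "e \<le> q"
  shows "(\<integral>x. \<bar>f x\<bar> powr e \<partial>M) \<le> (\<integral>x. \<bar>f x\<bar> powr q \<partial>M) powr (e / q)"
proof -
  have fe: "integrable M (\<lambda>x. \<bar>f x\<bar> powr e)"
    using e f(1) by (intro integrable_bounded_by_abs_powr[OF f(2)]) auto
  consider "0 < e" | "e = 0" "(\<integral>x. \<bar>f x\<bar> powr q \<partial>M) = 0" | "e = 0" "(\<integral>x. \<bar>f x\<bar> powr q \<partial>M) \<noteq> 0"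
    using e by linarith
  then show ?thesis
  proof cases
    case 1
    have "ennreal (\<integral>x. \<bar>f x\<bar> powr e \<partial>M) = (\<integral>\<^sup>+x. epowr (ennreal (\<bar>f x\<bar> powr q)) (e / q) \<partial>M)"
      using 1 e by (simp add: nn_integral_eq_integral[OF fe, symmetric] epowr_ennreal powr_powr)
    also have "\<dots> \<le> epowr (\<integral>\<^sup>+x. ennreal (\<bar>f x\<bar> powr q) \<partial>M) (e / q)"
      using 1 e f by (intro nn_integral_epowr_le_epowr_nn_integral) auto
    also have "\<dots> = ennreal ((\<integral>x. \<bar>f x\<bar> powr q \<partial>M) powr (e / q))"
      by (simp add: nn_integral_eq_integral[OF f(2)] epowr_ennreal)
    finally show ?thesis by (simp add: ennreal_le_iff)
  next
    case 2
    then have "AE x in M. f x = 0"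
      using integral_nonneg_eq_0_iff_AE[OF f(2)] by auto
    then have "(\<integral>x. \<bar>f x\<bar> powr e \<partial>M) = 0"
      by (subst integral_eq_zero_AE) (auto elim!: eventually_mono)
    then show ?thesis by simp
  next
    case 3
    have "(\<integral>x. \<bar>f x\<bar> powr e \<partial>M) \<le> (\<integral>x. 1 \<partial>M)"
      using 3 fe by (intro integral_mono) auto
    then show ?thesis using 3 by (simp add: prob_space)
  qed
qed

definition MZ_const :: "real \<Rightarrow> real" where
  "MZ_const q = max (2 * powr_expansion_const q) ((4 * powr_expansion_const q) powr (q / 2))"

lemma MZ_const_ge:
  assumes q: "2 \<le> q"
  shows "2 * powr_expansion_const q \<le> MZ_const q"
    and "4 * powr_expansion_const q \<le> MZ_const q powr (2 / q)"
    and "powr_expansion_const q * MZ_const q powr (1 - 2 / q) \<le> MZ_const q / 4"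
    and "0 < MZ_const q"
proof -
  define C where "C = powr_expansion_const q"
  define K where "K = MZ_const q"
  have C: "1 \<le> C" using powr_expansion_const_ge[OF q] by (simp add: C_def)
  show "2 * powr_expansion_const q \<le> MZ_const q" and K: "0 < MZ_const q"
    using C by (auto simp: MZ_const_def max_def C_def)
  have "((4 * C) powr (q / 2)) powr (2 / q) \<le> K powr (2 / q)"
    using C q by (intro powr_mono2) (auto simp: MZ_const_def C_def K_def)
  then show K4: "4 * powr_expansion_const q \<le> MZ_const q powr (2 / q)"
    using C q by (simp add: powr_powr C_def K_def)
  have "C * K powr (1 - 2 / q) = C * K / K powr (2 / q)" using K by (simp add: powr_diff K_def)
  also have "\<dots> \<le> C * K / (4 * C)" using K K4 C by (intro divide_left_mono) (auto simp: C_def K_def)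
  also have "\<dots> = K / 4" using C by simp
  finally show "powr_expansion_const q * MZ_const q powr (1 - 2 / q) \<le> MZ_const q / 4"
    by (simp add: C_def K_def)
qed

lemma powr_add_powr_diff_1_le:
  fixes x e :: real
  assumes "0 < x" "1 \<le> e"
  shows "x powr e + x powr (e - 1) \<le> (x + 1) powr e"
proof -
  have "x powr e + x powr (e - 1) = (x + 1) * x powr (e - 1)"
    using assms by (simp add: powr_diff field_simps)
  also have "\<dots> \<le> (x + 1) * (x + 1) powr (e - 1)"
    using assms by (intro mult_left_mono powr_mono2) auto
  also have "\<dots> = (x + 1) powr e" using assms by (simp add: powr_diff)
  finally show ?thesis .
qed

text \<open>With \<open>C\<close> the expansion constant, the bound
  \<open>K k\<^bsup>q/2\<^esup> m\<close> for \<open>k\<close> summands propagates to \<open>k + 1\<close> summands because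
  \<open>C K\<^bsup>1-2/q\<^esup> \<le> K / 4\<close> and \<open>C \<le> K / 2\<close>.\<close>

lemma MZ_const_step:
  fixes q m a :: real and k :: nat
  defines "C \<equiv> powr_expansion_const q" and "K \<equiv> MZ_const q"
  assumes q: "2 \<le> q" and m: "0 \<le> m" and a: "0 \<le> a" "a \<le> K * real k powr (q / 2) * m"
  shows "a + C * (a powr (1 - 2 / q) * m powr (2 / q) + m) \<le> K * real (Suc k) powr (q / 2) * m"
proof -
  define B where "B = K * real k powr (q / 2) * m"
  have K: "0 < K" "2 * C \<le> K" "C * K powr (1 - 2 / q) \<le> K / 4"
    using MZ_const_ge[OF q] by (simp_all add: C_def K_def)
  have C: "1 \<le> C" using powr_expansion_const_ge[OF q] by (simp add: C_def)
  have "a powr (1 - 2 / q) \<le> B powr (1 - 2 / q)"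
    using a q by (intro powr_mono2) (auto simp: B_def field_simps)
  then have "a + C * (a powr (1 - 2 / q) * m powr (2 / q) + m)
      \<le> B + C * (B powr (1 - 2 / q) * m powr (2 / q) + m)"
    using a C by (intro add_mono mult_left_mono mult_right_mono) (auto simp: B_def)
  also have "\<dots> \<le> K * real (Suc k) powr (q / 2) * m"
  proof (cases "k = 0 \<or> m = 0")
    case True
    then show ?thesis using K m q by (auto simp: B_def mult_right_mono)
  next
    case False
    define x where "x = real k"
    have x: "1 \<le> x" and m0: "0 < m" using False m by (auto simp: x_def)
    have "q / 2 * (1 - 2 / q) = q / 2 - 1" using q by (simp add: field_simps)
    then have "(x powr (q / 2)) powr (1 - 2 / q) = x powr (q / 2 - 1)"
      by (simp only: powr_powr)
    then have "B powr (1 - 2 / q) = K powr (1 - 2 / q) * x powr (q / 2 - 1) * m powr (1 - 2 / q)"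
      using K x m0 by (simp add: B_def x_def powr_mult)
    then have "B powr (1 - 2 / q) * m powr (2 / q) = K powr (1 - 2 / q) * x powr (q / 2 - 1) * m"
      using m0 by (simp add: mult.assoc powr_add[symmetric])
    then have "B + C * (B powr (1 - 2 / q) * m powr (2 / q) + m)
        = K * x powr (q / 2) * m + (C * K powr (1 - 2 / q)) * x powr (q / 2 - 1) * m + C * m"
      by (simp add: B_def x_def algebra_simps)
    also have "\<dots> \<le> K * x powr (q / 2) * m + K / 4 * x powr (q / 2 - 1) * m + K / 2 * x powr (q / 2 - 1) * m"
    proof -
      have "(C * K powr (1 - 2 / q)) * x powr (q / 2 - 1) * m \<le> K / 4 * x powr (q / 2 - 1) * m"
        using K m0 by (intro mult_right_mono) auto
      moreover have "C * 1 \<le> K / 2 * x powr (q / 2 - 1)"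
        using K C x q by (intro mult_mono ge_one_powr_ge_zero) auto
      then have "C * m \<le> K / 2 * x powr (q / 2 - 1) * m"
        using m0 by (simp add: mult_right_mono)
      ultimately show ?thesis by linarith
    qed
    also have "\<dots> \<le> K * (x powr (q / 2) + x powr (q / 2 - 1)) * m"
      using K m0 x by (simp add: algebra_simps)
    also have "\<dots> \<le> K * (x + 1) powr (q / 2) * m"
      using K x q m0 by (intro mult_right_mono mult_left_mono powr_add_powr_diff_1_le) auto
    finally show ?thesis by (simp add: x_def add.commute)
  qed
  finally show ?thesis .
qed


lemma (in prob_space) indep_expansion_terms:
  fixes S Y :: "'a \<Rightarrow> real"
  assumes q: "2 \<le> q" and ind: "indep_var borel Y borel S"
    and Sm: "S \<in> borel_measurable M" and Ym: "Y \<in> borel_measurable M"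
    and Y: "integrable M Y" "expectation Y = 0"
    and Sq: "integrable M (\<lambda>x. \<bar>S x\<bar> powr q)" and Yq: "integrable M (\<lambda>x. \<bar>Y x\<bar> powr q)"
  shows "integrable M (\<lambda>x. Y x * signed_powr q (S x))"
    and "(\<integral>x. Y x * signed_powr q (S x) \<partial>M) = 0"
    and "integrable M (\<lambda>x. (Y x)\<^sup>2 * \<bar>S x\<bar> powr (q - 2))"
    and "(\<integral>x. (Y x)\<^sup>2 * \<bar>S x\<bar> powr (q - 2) \<partial>M)
           \<le> (\<integral>x. \<bar>S x\<bar> powr q \<partial>M) powr (1 - 2 / q) * (\<integral>x. \<bar>Y x\<bar> powr q \<partial>M) powr (2 / q)"
proof -
  have ind1: "indep_var borel Y borel (\<lambda>x. signed_powr q (S x))"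
    using indep_var_compose[OF ind, of id borel "signed_powr q" borel] by (simp add: comp_def)
  have ind2: "indep_var borel (\<lambda>x. (Y x)\<^sup>2) borel (\<lambda>x. \<bar>S x\<bar> powr (q - 2))"
    using indep_var_compose[OF ind, of "\<lambda>x. x\<^sup>2" borel "\<lambda>x. \<bar>x\<bar> powr (q - 2)" borel]
    by (simp add: comp_def)
  have i1: "integrable M (\<lambda>x. signed_powr q (S x))"
    using Sm q abs_signed_powr by (intro integrable_bounded_by_abs_powr[OF Sq, of _ "q - 1"]) auto
  have i2: "integrable M (\<lambda>x. \<bar>S x\<bar> powr (q - 2))"
    using Sm q by (intro integrable_bounded_by_abs_powr[OF Sq, of _ "q - 2"]) auto
  have i3: "integrable M (\<lambda>x. (Y x)\<^sup>2)"
    using Ym q by (intro integrable_bounded_by_abs_powr[OF Yq, of _ 2]) auto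
  show "integrable M (\<lambda>x. Y x * signed_powr q (S x))"
    by (rule indep_var_integrable[OF ind1 Y(1) i1])
  show "(\<integral>x. Y x * signed_powr q (S x) \<partial>M) = 0"
    using indep_var_lebesgue_integral[OF ind1 Y(1) i1] Y(2) by simp
  show "integrable M (\<lambda>x. (Y x)\<^sup>2 * \<bar>S x\<bar> powr (q - 2))"
    by (rule indep_var_integrable[OF ind2 i3 i2])
  have "(\<integral>x. \<bar>S x\<bar> powr (q - 2) \<partial>M) \<le> (\<integral>x. \<bar>S x\<bar> powr q \<partial>M) powr (1 - 2 / q)"
    using integral_abs_powr_le_moment_powr[OF Sm Sq, of "q - 2"] q by (simp add: diff_divide_distrib)
  moreover have "(\<integral>x. (Y x)\<^sup>2 \<partial>M) \<le> (\<integral>x. \<bar>Y x\<bar> powr q \<partial>M) powr (2 / q)"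
    using integral_abs_powr_le_moment_powr[OF Ym Yq, of 2] q by simp
  ultimately show "(\<integral>x. (Y x)\<^sup>2 * \<bar>S x\<bar> powr (q - 2) \<partial>M)
      \<le> (\<integral>x. \<bar>S x\<bar> powr q \<partial>M) powr (1 - 2 / q) * (\<integral>x. \<bar>Y x\<bar> powr q \<partial>M) powr (2 / q)"
    unfolding indep_var_lebesgue_integral[OF ind2 i3 i2]
    by (simp add: mult.commute mult_mono)
qed

lemma (in prob_space) moment_add_indep_le:
  fixes S Y :: "'a \<Rightarrow> real" and q :: real
  defines "a \<equiv> \<integral>x. \<bar>S x\<bar> powr q \<partial>M" and "m \<equiv> \<integral>x. \<bar>Y x\<bar> powr q \<partial>M"
  assumes q: "2 \<le> q" and ind: "indep_var borel Y borel S"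
    and Sm: "S \<in> borel_measurable M" and Ym: "Y \<in> borel_measurable M"
    and Y: "integrable M Y" "expectation Y = 0"
    and Sq: "integrable M (\<lambda>x. \<bar>S x\<bar> powr q)" and Yq: "integrable M (\<lambda>x. \<bar>Y x\<bar> powr q)"
  shows "(\<integral>\<^sup>+x. ennreal (\<bar>S x + Y x\<bar> powr q) \<partial>M)
           \<le> ennreal (a + powr_expansion_const q * (a powr (1 - 2 / q) * m powr (2 / q) + m))"
proof -
  define C where "C = powr_expansion_const q"
  define R where "R x = \<bar>S x\<bar> powr q + q * (Y x * signed_powr q (S x))
      + C * ((Y x)\<^sup>2 * \<bar>S x\<bar> powr (q - 2) + \<bar>Y x\<bar> powr q)" for x
  note terms = indep_expansion_terms[OF q ind Sm Ym Y Sq Yq]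
  have R: "integrable M R"
    unfolding R_def
    by (intro Bochner_Integration.integrable_add integrable_mult_right) (use Sq Yq terms in auto)
  have SY: "\<bar>S x + Y x\<bar> powr q \<le> R x" for x
    using abs_add_powr_le_expansion[OF q, of "S x" "Y x"] by (simp add: R_def C_def ac_simps)
  have C: "0 \<le> C" using powr_expansion_const_ge[OF q] by (simp add: C_def)
  have "(\<integral>\<^sup>+x. ennreal (\<bar>S x + Y x\<bar> powr q) \<partial>M) \<le> (\<integral>\<^sup>+x. ennreal (R x) \<partial>M)"
    by (intro nn_integral_mono ennreal_leI SY)
  also have "\<dots> = ennreal (\<integral>x. R x \<partial>M)"
    using R SY by (intro nn_integral_eq_integral AE_I2) (auto intro: order_trans[OF powr_ge_zero])
  also have "(\<integral>x. R x \<partial>M) = a + C * ((\<integral>x. (Y x)\<^sup>2 * \<bar>S x\<bar> powr (q - 2) \<partial>M) + m)"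
    using Sq Yq terms by (simp add: R_def a_def m_def)
  also have "\<dots> \<le> a + C * (a powr (1 - 2 / q) * m powr (2 / q) + m)"
    using terms(4) C by (simp add: a_def m_def mult_left_mono)
  finally show ?thesis by (simp add: C_def ennreal_leI)
qed

lemma (in prob_space) MZ_inequality:
  fixes Z :: "'i \<Rightarrow> 'a \<Rightarrow> real" and q m :: real
  assumes q: "2 \<le> q" and indep: "indep_vars (\<lambda>_. borel) Z J"
    and int: "\<And>j. j \<in> J \<Longrightarrow> integrable M (Z j)"
    and mean: "\<And>j. j \<in> J \<Longrightarrow> expectation (Z j) = 0"
    and mom: "\<And>j. j \<in> J \<Longrightarrow> (\<integral>\<^sup>+x. ennreal (\<bar>Z j x\<bar> powr q) \<partial>M) = ennreal m"
    and m: "0 \<le> m" and I: "finite I" "I \<subseteq> J"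
  shows "(\<integral>\<^sup>+x. ennreal (\<bar>\<Sum>j\<in>I. Z j x\<bar> powr q) \<partial>M) \<le> ennreal (MZ_const q * real (card I) powr (q / 2) * m)"
  using I
proof (induction I rule: finite_induct)
  case (insert i I)
  define S where "S x = (\<Sum>j\<in>I. Z j x)" for x
  have ZJ: "Z j \<in> borel_measurable M" "integrable M (\<lambda>x. \<bar>Z j x\<bar> powr q)"
    "(\<integral>x. \<bar>Z j x\<bar> powr q \<partial>M) = m" if "j \<in> J" for j
  proof -
    show Zj: "Z j \<in> borel_measurable M" using int[OF that] by auto
    show Zq: "integrable M (\<lambda>x. \<bar>Z j x\<bar> powr q)"
      using mom[OF that] Zj by (intro integrableI_nonneg) auto
    show "(\<integral>x. \<bar>Z j x\<bar> powr q \<partial>M) = m"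
      using nn_integral_eq_integral[OF Zq] mom[OF that] m by simp
  qed
  have Sm: "S \<in> borel_measurable M"
    unfolding S_def using insert ZJ by (intro borel_measurable_sum) auto
  have IH: "(\<integral>\<^sup>+x. ennreal (\<bar>S x\<bar> powr q) \<partial>M) \<le> ennreal (MZ_const q * real (card I) powr (q / 2) * m)"
    using insert by (simp add: S_def)
  then obtain a where a: "(\<integral>\<^sup>+x. ennreal (\<bar>S x\<bar> powr q) \<partial>M) = ennreal a" "0 \<le> a"
    by (cases "\<integral>\<^sup>+x. ennreal (\<bar>S x\<bar> powr q) \<partial>M") (auto simp: top_unique)
  have Sq: "integrable M (\<lambda>x. \<bar>S x\<bar> powr q)"
    using a Sm by (intro integrableI_nonneg) auto
  then have Sa: "(\<integral>x. \<bar>S x\<bar> powr q \<partial>M) = a"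
    using nn_integral_eq_integral[OF Sq] a by simp
  have ind: "indep_var borel (Z i) borel S"
    using indep_vars_sum[OF insert(1,2) indep_vars_subset[OF indep]] insert by (simp add: S_def[abs_def])
  have "(\<integral>\<^sup>+x. ennreal (\<bar>\<Sum>j\<in>insert i I. Z j x\<bar> powr q) \<partial>M)
      = (\<integral>\<^sup>+x. ennreal (\<bar>S x + Z i x\<bar> powr q) \<partial>M)"
    using insert by (simp add: S_def add.commute)
  also have "\<dots> \<le> ennreal (a + powr_expansion_const q * (a powr (1 - 2 / q) * m powr (2 / q) + m))"
    using moment_add_indep_le[OF q ind Sm ZJ(1) int mean Sq ZJ(2)] insert Sa ZJ(3) by simp
  also have "\<dots> \<le> ennreal (MZ_const q * real (card (insert i I)) powr (q / 2) * m)"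
  proof (intro ennreal_leI)
    have "a \<le> MZ_const q * real (card I) powr (q / 2) * m"
      using IH a MZ_const_ge(4)[OF q] m by (simp add: ennreal_le_iff)
    from MZ_const_step[OF q m a(2) this]
    show "a + powr_expansion_const q * (a powr (1 - 2 / q) * m powr (2 / q) + m)
        \<le> MZ_const q * real (card (insert i I)) powr (q / 2) * m"
      using insert by simp
  qed
  finally show ?case .
qed (use q in simp)


section \<open>Sample means of independent copies\<close>

lemma (in prob_space) distr_eq_imp_integrals_eq:
  fixes U V :: "'a \<Rightarrow> real"
  assumes U: "U \<in> borel_measurable M" and V: "V \<in> borel_measurable M"
    and eq: "distr M borel U = distr M borel V"
  shows "integrable M U \<longleftrightarrow> integrable M V"
    and "expectation U = expectation V"
    and "f \<in> borel_measurable borel \<Longrightarrow> (\<integral>\<^sup>+x. f (U x) \<partial>M) = (\<integral>\<^sup>+x. f (V x) \<partial>M)"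
proof -
  show "integrable M U \<longleftrightarrow> integrable M V"
    using integrable_distr_eq[OF U, of "\<lambda>x. x"] integrable_distr_eq[OF V, of "\<lambda>x. x"] eq by simp
  show "expectation U = expectation V"
    using integral_distr[OF U, of "\<lambda>x. x"] integral_distr[OF V, of "\<lambda>x. x"] eq by simp
  show "(\<integral>\<^sup>+x. f (U x) \<partial>M) = (\<integral>\<^sup>+x. f (V x) \<partial>M)" if "f \<in> borel_measurable borel"
    using nn_integral_distr[OF U, of f] nn_integral_distr[OF V, of f] that eq by simp
qed

lemma (in prob_space) nn_Lnorm_mean_of_copies_le:
  fixes W :: "nat \<Rightarrow> 'a \<Rightarrow> real" and V :: "'a \<Rightarrow> real" and n :: nat
  assumes q: "2 \<le> q" and indep: "indep_vars (\<lambda>_. borel) W UNIV"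
    and W: "\<And>j. W j \<in> borel_measurable M" and V: "V \<in> borel_measurable M"
    and law: "\<And>j. distr M borel (W j) = distr M borel V"
    and V0: "integrable M V" "expectation V = 0" and n: "1 \<le> n"
  shows "nn_Lnorm M q (\<lambda>x. ennreal \<bar>(1 / real n) * (\<Sum>j=1..n. W j x)\<bar>)
           \<le> ennreal (MZ_const q powr (1 / q) * real n powr (- 1 / 2)) * nn_Lnorm M q (\<lambda>x. ennreal \<bar>V x\<bar>)"
proof -
  have q0: "0 < q" using q by simp
  define K where "K = MZ_const q"
  have K: "0 < K" using MZ_const_ge[OF q] by (simp add: K_def)
  have "nn_Lnorm M q (\<lambda>x. ennreal \<bar>(1 / real n) * (\<Sum>j=1..n. W j x)\<bar>)
      = ennreal (1 / real n) * epowr (\<integral>\<^sup>+x. ennreal (\<bar>\<Sum>j=1..n. W j x\<bar> powr q) \<partial>M) (1 / q)"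
  proof -
    have "(\<lambda>x. ennreal \<bar>(1 / real n) * (\<Sum>j=1..n. W j x)\<bar>)
        = (\<lambda>x. ennreal (1 / real n) * ennreal \<bar>\<Sum>j=1..n. W j x\<bar>)"
      by (simp add: abs_mult ennreal_mult[symmetric])
    then show ?thesis
      using q0 W by (simp add: nn_Lnorm_cmult) (simp add: nn_Lnorm_def epowr_ennreal)
  qed
  also have "\<dots> \<le> ennreal (K powr (1 / q) * real n powr (- 1 / 2)) * nn_Lnorm M q (\<lambda>x. ennreal \<bar>V x\<bar>)"
  proof (cases "\<integral>\<^sup>+x. ennreal (\<bar>V x\<bar> powr q) \<partial>M" rule: ennreal_cases)
    case top
    then show ?thesis using K n by (simp add: nn_Lnorm_def epowr_ennreal ennreal_mult_top)
  next
    case (real v)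
    have mom: "(\<integral>\<^sup>+x. ennreal (\<bar>W j x\<bar> powr q) \<partial>M) = ennreal v" for j
      using distr_eq_imp_integrals_eq(3)[OF W V law, of "\<lambda>x. ennreal (\<bar>x\<bar> powr q)"] real by simp
    have "(\<integral>\<^sup>+x. ennreal (\<bar>\<Sum>j\<in>{1..n}. W j x\<bar> powr q) \<partial>M)
        \<le> ennreal (K * real (card {1..n}) powr (q / 2) * v)"
      unfolding K_def
    proof (rule MZ_inequality[OF q indep])
      show "integrable M (W j)" "expectation (W j) = 0" for j
        using distr_eq_imp_integrals_eq(1,2)[OF W V law] V0 by simp_all
    qed (use mom real in auto)
    then have "epowr (\<integral>\<^sup>+x. ennreal (\<bar>\<Sum>j=1..n. W j x\<bar> powr q) \<partial>M) (1 / q)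
        \<le> ennreal (K powr (1 / q) * real n powr (1 / 2) * v powr (1 / q))"
      using epowr_mono[of _ _ "1 / q"] K real q0
      by (fastforce simp: epowr_ennreal powr_mult powr_powr)
    then have "ennreal (1 / real n) * epowr (\<integral>\<^sup>+x. ennreal (\<bar>\<Sum>j=1..n. W j x\<bar> powr q) \<partial>M) (1 / q)
        \<le> ennreal (1 / real n * (K powr (1 / q) * real n powr (1 / 2) * v powr (1 / q)))"
      by (subst ennreal_mult) (auto intro: mult_left_mono)
    also have "1 / real n * (K powr (1 / q) * real n powr (1 / 2) * v powr (1 / q))
        = K powr (1 / q) * real n powr (- 1 / 2) * v powr (1 / q)"
      using n by (simp add: powr_diff[of "real n" "1 / 2" 1, simplified] field_simps)
    finally show ?thesis
      using real K by (simp add: nn_Lnorm_def epowr_ennreal ennreal_mult)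
  qed
  finally show ?thesis by (simp add: K_def)
qed


section \<open>Jointly measurable random functions\<close>

lemma jointly_measurable_pair:
  "jointly_measurable P S Y \<Longrightarrow> (\<lambda>x. Y (fst x) (snd x)) \<in> borel_measurable (P \<Otimes>\<^sub>M S)"
  unfolding jointly_measurable_def by (simp add: case_prod_beta')

lemma jointly_measurableI:
  "(\<lambda>x. Y (fst x) (snd x)) \<in> borel_measurable (P \<Otimes>\<^sub>M S) \<Longrightarrow> jointly_measurable P S Y"
  unfolding jointly_measurable_def by (simp add: case_prod_beta')

lemma jointly_measurable_sample:
  "jointly_measurable P S Y \<Longrightarrow> \<omega> \<in> space P \<Longrightarrow> Y \<omega> \<in> borel_measurable S"
  unfolding jointly_measurable_def using measurable_Pair2 by fastforce

lemma jointly_measurable_eval: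
  "jointly_measurable P S Y \<Longrightarrow> s \<in> space S \<Longrightarrow> (\<lambda>\<omega>. Y \<omega> s) \<in> borel_measurable P"
  unfolding jointly_measurable_def using measurable_Pair1 by fastforce

lemma jointly_measurable_restrict:
  "jointly_measurable P S Y \<Longrightarrow>
    (\<lambda>\<omega>. restrict (Y \<omega>) (space S)) \<in> P \<rightarrow>\<^sub>M PiM (space S) (\<lambda>_. borel)"
  by (rule measurable_restrict) (auto dest: jointly_measurable_eval)

lemma borel_measurable_expec:
  assumes "sigma_finite_measure P" "jointly_measurable P S Y"
  shows "expec P Y \<in> borel_measurable S"
proof -
  have "(\<lambda>(s, \<omega>). Y \<omega> s) \<in> borel_measurable (S \<Otimes>\<^sub>M P)"
    using measurable_pair_swap[OF assms(2)[unfolded jointly_measurable_def]] by simp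
  from sigma_finite_measure.borel_measurable_lebesgue_integral[OF assms(1) this]
  show ?thesis by (simp add: expec_def)
qed

lemma borel_measurable_Lp_norm_sample:
  assumes "sigma_finite_measure S" "jointly_measurable P S Y"
  shows "(\<lambda>\<omega>. Lp_norm S p (Y \<omega>)) \<in> borel_measurable P"
proof -
  have "(\<lambda>(\<omega>, s). ennreal (\<bar>Y \<omega> s\<bar> powr p)) \<in> borel_measurable (P \<Otimes>\<^sub>M S)"
    using jointly_measurable_pair[OF assms(2)] by (simp add: case_prod_beta')
  from sigma_finite_measure.borel_measurable_nn_integral[OF assms(1) this]
  show ?thesis unfolding Lp_norm_def by (intro measurable_epowr) simp
qed

text \<open>Evaluation at a point \<open>s\<close> is measurable on the product \<open>\<sigma>\<close>-algebra, so independence and equality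
  of laws of the random functions pass to their values at \<open>s\<close>.\<close>

lemma (in prob_space) nn_Lnorm_eval_mean_of_copies_le:
  fixes Y :: "'a \<Rightarrow> 's \<Rightarrow> real" and \<xi> :: "nat \<Rightarrow> 'a \<Rightarrow> 's \<Rightarrow> real" and n :: nat and s :: 's
  defines "c \<equiv> \<integral>\<omega>. Y \<omega> s \<partial>M"
  assumes q: "2 \<le> q" and Y: "jointly_measurable M S Y" and \<xi>: "\<And>j. jointly_measurable M S (\<xi> j)"
    and indep: "indep_vars (\<lambda>_. PiM (space S) (\<lambda>_. borel)) (\<lambda>j \<omega>. restrict (\<xi> j \<omega>) (space S)) UNIV"
    and law: "\<And>j. law M S (\<xi> j) = law M S Y"
    and s: "s \<in> space S" and Ys: "integrable M (\<lambda>\<omega>. Y \<omega> s)" and n: "1 \<le> n"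
  shows "nn_Lnorm M q (\<lambda>\<omega>. ennreal \<bar>(1 / real n) * (\<Sum>j=1..n. \<xi> j \<omega> s - c)\<bar>)
     \<le> ennreal (MZ_const q powr (1 / q) * real n powr (- 1 / 2)) * nn_Lnorm M q (\<lambda>\<omega>. ennreal \<bar>Y \<omega> s - c\<bar>)"
proof -
  define ev where "ev f = f s - c" for f :: "'s \<Rightarrow> real"
  have ev: "ev \<in> PiM (space S) (\<lambda>_. borel) \<rightarrow>\<^sub>M borel"
    unfolding ev_def using s by measurable
  have W: "(\<lambda>\<omega>. ev (restrict (Z \<omega>) (space S))) = (\<lambda>\<omega>. Z \<omega> s - c)" for Z :: "'a \<Rightarrow> 's \<Rightarrow> real"
    using s by (simp add: ev_def)
  have "distr M borel (\<lambda>\<omega>. \<xi> j \<omega> s - c) = distr M borel (\<lambda>\<omega>. Y \<omega> s - c)" for j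
    using distr_distr[OF ev jointly_measurable_restrict[OF \<xi>[of j]]]
      distr_distr[OF ev jointly_measurable_restrict[OF Y]] law[of j]
    by (simp add: law_def comp_def W)
  moreover have "indep_vars (\<lambda>_. borel) (\<lambda>j \<omega>. \<xi> j \<omega> s - c) UNIV"
    using indep_vars_compose2[OF indep, of "\<lambda>_. ev"] ev by (simp add: W)
  moreover have "integrable M (\<lambda>\<omega>. Y \<omega> s - c)" "expectation (\<lambda>\<omega>. Y \<omega> s - c) = 0"
    using Ys by (simp_all add: c_def prob_space)
  ultimately show ?thesis
    using nn_Lnorm_mean_of_copies_le[OF q, of "\<lambda>j \<omega>. \<xi> j \<omega> s - c" "\<lambda>\<omega>. Y \<omega> s - c" n]
      jointly_measurable_eval[OF \<xi> s] jointly_measurable_eval[OF Y s] n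
    by (simp add: sum_subtractf)
qed


lemma Lqp_norm_mean_of_copies_le:
  fixes P :: "'w measure" and S :: "'s measure" and Y :: "'w \<Rightarrow> 's \<Rightarrow> real" and m :: "'s \<Rightarrow> real"
    and \<xi> :: "nat \<Rightarrow> 'w \<Rightarrow> 's \<Rightarrow> real" and n :: nat
  assumes P: "prob_space P" and S: "sigma_finite_measure S" and q: "2 \<le> q" and p: "1 \<le> p" "p \<le> q"
    and Y: "jointly_measurable P S Y" and m: "m \<in> borel_measurable S"
    and \<xi>: "\<And>j. jointly_measurable P S (\<xi> j)"
    and indep: "prob_space.indep_vars P (\<lambda>_. PiM (space S) (\<lambda>_. borel))
                  (\<lambda>j \<omega>. restrict (\<xi> j \<omega>) (space S)) UNIV"
    and law: "\<And>j. law P S (\<xi> j) = law P S Y"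
    and mean: "AE s in S. integrable P (\<lambda>\<omega>. Y \<omega> s) \<and> (\<integral>\<omega>. Y \<omega> s \<partial>P) = m s"
    and n: "1 \<le> n"
  shows "Lqp_norm P S q p (\<lambda>\<omega> s. (1 / real n) * (\<Sum>j=1..n. \<xi> j \<omega> s - m s))
     \<le> ennreal (MZ_const q powr (1 / q) * real n powr (- 1 / 2)) * Lpq_norm P S p q (\<lambda>\<omega> s. Y \<omega> s - m s)"
proof -
  interpret prob_space P by fact
  have p0: "0 < p" and q0: "0 < q" using p by auto
  define c where "c = MZ_const q powr (1 / q) * real n powr (- 1 / 2)"
  have [measurable]: "(\<lambda>x. \<xi> j (fst x) (snd x)) \<in> borel_measurable (P \<Otimes>\<^sub>M S)" for j
    using jointly_measurable_pair[OF \<xi>] .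
  have [measurable]: "(\<lambda>x. Y (fst x) (snd x)) \<in> borel_measurable (P \<Otimes>\<^sub>M S)"
    using jointly_measurable_pair[OF Y] .
  have [measurable]: "m \<in> borel_measurable S" by fact
  have "Lqp_norm P S q p (\<lambda>\<omega> s. (1 / real n) * (\<Sum>j=1..n. \<xi> j \<omega> s - m s))
      = nn_Lnorm P q (\<lambda>\<omega>. nn_Lnorm S p (\<lambda>s. ennreal \<bar>(1 / real n) * (\<Sum>j=1..n. \<xi> j \<omega> s - m s)\<bar>))"
    using p0 q0 by (simp add: Lqp_norm_eq_nn_Lnorm Lp_norm_eq_nn_Lnorm)
  also have "\<dots> \<le> nn_Lnorm S p (\<lambda>s. nn_Lnorm P q (\<lambda>\<omega>. ennreal \<bar>(1 / real n) * (\<Sum>j=1..n. \<xi> j \<omega> s - m s)\<bar>))"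
    by (rule nn_Lnorm_swap_le[OF finite_measure_axioms S p]) (simp add: case_prod_beta')
  also have "\<dots> \<le> nn_Lnorm S p (\<lambda>s. ennreal c * nn_Lnorm P q (\<lambda>\<omega>. ennreal \<bar>Y \<omega> s - m s\<bar>))"
  proof (rule nn_Lnorm_mono_AE[OF _ p0])
    show "AE s in S. nn_Lnorm P q (\<lambda>\<omega>. ennreal \<bar>(1 / real n) * (\<Sum>j=1..n. \<xi> j \<omega> s - m s)\<bar>)
        \<le> ennreal c * nn_Lnorm P q (\<lambda>\<omega>. ennreal \<bar>Y \<omega> s - m s\<bar>)"
      using mean AE_space[of S]
    proof eventually_elim
      case (elim s)
      then show ?case
        using nn_Lnorm_eval_mean_of_copies_le[OF q Y \<xi> indep law elim(2) _ n] by (simp add: c_def)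
    qed
  qed
  also have "\<dots> = ennreal c * nn_Lnorm S p (\<lambda>s. nn_Lnorm P q (\<lambda>\<omega>. ennreal \<bar>Y \<omega> s - m s\<bar>))"
    by (intro nn_Lnorm_cmult borel_measurable_nn_Lnorm_section[OF sigma_finite_measure])
      (auto simp: c_def case_prod_beta' p0)
  finally show ?thesis
    using p0 q0 by (simp add: Lpq_norm_eq_nn_Lnorm c_def)
qed


section \<open>Choice of the number of levels and of the sample sizes\<close>

lemma geometric_sum_mult_diff_1: "(\<Sum>l=1..L. (y::real) ^ l) * (y - 1) = y ^ Suc L - y"
  by (induction L) (auto simp: algebra_simps)

lemma geometric_sum_le_lt1:
  fixes y :: real
  assumes "0 < y" "y < 1"
  shows "(\<Sum>l=1..L. y ^ l) \<le> y / (1 - y)"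
proof -
  have "(\<Sum>l=1..L. y ^ l) * (1 - y) \<le> y"
    using geometric_sum_mult_diff_1[of y L] assms by (simp add: algebra_simps)
  then show ?thesis using assms by (simp add: le_divide_eq)
qed

lemma geometric_sum_le_gt1:
  fixes y :: real
  assumes "1 < y"
  shows "(\<Sum>l=1..L. y ^ l) \<le> y / (y - 1) * y ^ L"
proof -
  have "(\<Sum>l=1..L. y ^ l) * (y - 1) \<le> y * y ^ L"
    using geometric_sum_mult_diff_1[of y L] assms by simp
  then show ?thesis using assms by (simp add: le_divide_eq)
qed

lemma exists_least_power_ge:
  fixes A t :: real
  assumes A: "1 < A"
  obtains L :: nat where "1 \<le> L" "t \<le> A ^ L" "A ^ L \<le> A * max 1 t"
proof -
  obtain n where "t < A ^ n" using real_arch_pow[OF A] by blast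
  moreover have "A ^ n \<le> A ^ max n 1" using A by (intro power_increasing) auto
  ultimately have "t \<le> A ^ max n 1" by linarith
  define L where "L = (LEAST L. 1 \<le> L \<and> t \<le> A ^ L)"
  have L: "1 \<le> L" "t \<le> A ^ L"
    using LeastI[of "\<lambda>L. 1 \<le> L \<and> t \<le> A ^ L" "max n 1"] \<open>t \<le> A ^ max n 1\<close> by (auto simp: L_def)
  have "A ^ L \<le> A * max 1 t"
  proof (cases "L = 1")
    case False
    then have "\<not> (1 \<le> L - 1 \<and> t \<le> A ^ (L - 1))"
      using not_less_Least[of "L - 1" "\<lambda>L. 1 \<le> L \<and> t \<le> A ^ L"] L by (simp add: L_def)
    then have "A * A ^ (L - 1) \<le> A * max 1 t" using False L A by auto
    then show ?thesis using L by (simp add: power_eq_if split: if_splits)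
  qed (use A in simp)
  with L that show ?thesis by blast
qed

lemma powr_ge_1_of_le_1: "0 < (\<epsilon>::real) \<Longrightarrow> \<epsilon> \<le> 1 \<Longrightarrow> c \<le> 0 \<Longrightarrow> 1 \<le> \<epsilon> powr c"
  using powr_mono2'[of c \<epsilon> 1] by simp

lemma pow_powr: "0 < (A::real) \<Longrightarrow> (A ^ l) powr r = (A powr r) ^ l"
  by (simp add: powr_realpow[symmetric] powr_powr mult.commute)

locale mlmc_rates =
  fixes \<alpha> \<beta> \<gamma> C\<alpha> C\<beta> C\<gamma> A c1 c2 :: real and N :: "nat \<Rightarrow> nat" and Cost :: "nat \<Rightarrow> real"
  assumes params: "0 < \<alpha>" "0 < \<beta>" "0 < \<gamma>" "0 < C\<alpha>" "0 < C\<beta>" "0 < C\<gamma>" "1 < A"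
    and N_equiv: "0 < c1" "0 < c2" "\<And>l. 1 \<le> l \<Longrightarrow> c1 * A ^ l \<le> real (N l) \<and> real (N l) \<le> c2 * A ^ l"
    and cost: "\<And>l. 1 \<le> l \<Longrightarrow> Cost l \<le> C\<gamma> * real (N l) powr \<gamma>"
begin

definition level_const :: real where
  "level_const = A * max 1 ((4 * C\<alpha>) powr (1 / \<alpha>) / c1)"

lemma level_const_ge: "A \<le> level_const"
  using params by (simp add: level_const_def)

lemma exists_num_levels:
  assumes e: "0 < \<epsilon>" "\<epsilon> \<le> 1 / 2"
  obtains L where "1 \<le> L" "C\<alpha> * real (N L) powr (- \<alpha>) \<le> \<epsilon> / 4"
    "A ^ L \<le> level_const * \<epsilon> powr (- 1 / \<alpha>)"
proof -
  define c where "c = (4 * C\<alpha>) powr (1 / \<alpha>) / c1"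
  obtain L where L: "1 \<le> L" "c * \<epsilon> powr (- 1 / \<alpha>) \<le> A ^ L" "A ^ L \<le> A * max 1 (c * \<epsilon> powr (- 1 / \<alpha>))"
    using exists_least_power_ge[OF params(7)] .
  have AL: "0 < A ^ L" using params by simp
  have "(4 * C\<alpha> / \<epsilon>) powr (1 / \<alpha>) \<le> c1 * A ^ L"
    using L(2) N_equiv params e
    by (simp add: c_def powr_divide powr_minus_divide divide_le_eq mult.commute)
      (simp add: mult_ac)
  then have "((4 * C\<alpha> / \<epsilon>) powr (1 / \<alpha>)) powr \<alpha> \<le> (c1 * A ^ L) powr \<alpha>"
    using params by (intro powr_mono2) auto
  then have "4 * C\<alpha> / \<epsilon> \<le> (c1 * A ^ L) powr \<alpha>"
    using params e by (simp add: powr_powr)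
  then have "C\<alpha> * (c1 * A ^ L) powr (- \<alpha>) \<le> \<epsilon> / 4"
    using params e N_equiv AL by (simp add: powr_minus field_simps)
  moreover have "real (N L) powr (- \<alpha>) \<le> (c1 * A ^ L) powr (- \<alpha>)"
    using N_equiv(3)[OF L(1)] N_equiv(1) params by (intro powr_mono2') auto
  ultimately have "C\<alpha> * real (N L) powr (- \<alpha>) \<le> \<epsilon> / 4"
    using params by (smt (verit) mult_left_mono)
  moreover have "max 1 (c * \<epsilon> powr (- 1 / \<alpha>)) \<le> max 1 c * \<epsilon> powr (- 1 / \<alpha>)"
    using powr_ge_1_of_le_1[of \<epsilon> "- 1 / \<alpha>"] e params
    by (auto simp: max_def intro: order_trans[OF _ mult_right_mono[of 1 c]])
  then have "A ^ L \<le> level_const * \<epsilon> powr (- 1 / \<alpha>)"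
    using L(3) params unfolding level_const_def c_def
    by (smt (verit, best) mult.assoc mult_left_mono)
  ultimately show ?thesis using L(1) that by blast
qed


definition level_ratio :: real where
  "level_ratio = A powr ((\<gamma> - 2 * \<beta>) / 3)"

definition rate_factor :: "real \<Rightarrow> real" where
  "rate_factor \<epsilon> = (if \<beta> > \<gamma> / 2 then 1 else if \<beta> = \<gamma> / 2 then \<bar>log A \<epsilon>\<bar> ^ 3
     else \<epsilon> powr (- (\<gamma> - 2 * \<beta>) / \<alpha>))"

definition level_sum_const :: real where
  "level_sum_const = (if \<beta> > \<gamma> / 2 then (level_ratio / (1 - level_ratio)) ^ 3
     else if \<beta> = \<gamma> / 2 then (log A level_const / log A 2 + 1 / \<alpha>) ^ 3
     else (level_ratio * level_const powr ((\<gamma> - 2 * \<beta>) / 3) / (level_ratio - 1)) ^ 3)"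

lemma level_ratio_cases:
  "\<beta> > \<gamma> / 2 \<Longrightarrow> 0 < level_ratio \<and> level_ratio < 1"
  "\<beta> = \<gamma> / 2 \<Longrightarrow> level_ratio = 1"
  "\<beta> < \<gamma> / 2 \<Longrightarrow> 1 < level_ratio"
  using params by (auto simp: level_ratio_def powr_less_one)

lemma level_sum_const_nonneg: "0 \<le> level_sum_const"
  using level_ratio_cases level_const_ge params
  by (cases "\<beta> > \<gamma> / 2"; cases "\<beta> = \<gamma> / 2") (auto simp: level_sum_const_def le_log_iff)

lemma num_levels_le_abs_log:
  assumes e: "0 < \<epsilon>" "\<epsilon> \<le> 1 / 2" and L: "A ^ L \<le> level_const * \<epsilon> powr (- 1 / \<alpha>)"
  shows "real L \<le> (log A level_const / log A 2 + 1 / \<alpha>) * \<bar>log A \<epsilon>\<bar>"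
proof -
  have B: "1 \<le> log A level_const" "0 < level_const"
    using level_const_ge params by (auto simp: le_log_iff)
  have log2: "0 < log A 2" using params by simp
  have "log A \<epsilon> \<le> log A (1 / 2)" using e params by (simp add: log_le_cancel_iff)
  then have "log A \<epsilon> \<le> - log A 2" using params by (simp add: log_divide)
  then have abs: "log A 2 \<le> \<bar>log A \<epsilon>\<bar>" "\<bar>log A \<epsilon>\<bar> = - log A \<epsilon>"
    using log2 by linarith+
  have "real L = log A (A ^ L)" using params by (simp add: log_nat_power)
  also have "\<dots> \<le> log A (level_const * \<epsilon> powr (- 1 / \<alpha>))"
    using L params B e by (subst log_le_cancel_iff) auto
  also have "\<dots> = log A level_const + 1 / \<alpha> * \<bar>log A \<epsilon>\<bar>"
    using B e params abs by (simp add: log_mult log_powr)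
  also have "log A level_const \<le> log A level_const / log A 2 * \<bar>log A \<epsilon>\<bar>"
    using mult_left_mono[OF abs(1), of "log A level_const / log A 2"] B log2 by simp
  finally show ?thesis by (simp add: algebra_simps)
qed

lemma level_sum_cube_le:
  assumes e: "0 < \<epsilon>" "\<epsilon> \<le> 1 / 2" and L: "A ^ L \<le> level_const * \<epsilon> powr (- 1 / \<alpha>)"
  shows "(\<Sum>l=1..L. level_ratio ^ l) ^ 3 \<le> level_sum_const * rate_factor \<epsilon>"
proof -
  define \<rho> where "\<rho> = (\<gamma> - 2 * \<beta>) / 3"
  have G0: "0 \<le> (\<Sum>l=1..L. level_ratio ^ l)" by (simp add: level_ratio_def sum_nonneg)
  consider "\<beta> > \<gamma> / 2" | "\<beta> = \<gamma> / 2" | "\<beta> < \<gamma> / 2" by linarith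
  then show ?thesis
  proof cases
    case 1
    then show ?thesis
      using geometric_sum_le_lt1[of level_ratio L] level_ratio_cases(1) G0
      by (simp add: level_sum_const_def rate_factor_def power_mono)
  next
    case 2
    then show ?thesis
      using num_levels_le_abs_log[OF e L] level_ratio_cases(2)
      by (simp add: level_sum_const_def rate_factor_def power_mono flip: power_mult_distrib)
  next
    case 3
    have B: "0 < level_const" using level_const_ge params by simp
    have "level_ratio ^ L = (A ^ L) powr \<rho>" using params by (simp add: pow_powr level_ratio_def \<rho>_def)
    also have "\<dots> \<le> (level_const * \<epsilon> powr (- 1 / \<alpha>)) powr \<rho>"
      using L params 3 by (intro powr_mono2) (auto simp: \<rho>_def)
    also have "\<dots> = level_const powr \<rho> * \<epsilon> powr (- \<rho> / \<alpha>)"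
      using B e by (simp add: powr_mult powr_powr)
    finally have "(\<Sum>l=1..L. level_ratio ^ l)
        \<le> level_ratio / (level_ratio - 1) * (level_const powr \<rho> * \<epsilon> powr (- \<rho> / \<alpha>))"
      using geometric_sum_le_gt1[OF level_ratio_cases(3)[OF 3], of L] level_ratio_cases(3)[OF 3]
      by (smt (verit) divide_pos_pos mult_left_mono)
    then have "(\<Sum>l=1..L. level_ratio ^ l) ^ 3
        \<le> (level_ratio * level_const powr \<rho> / (level_ratio - 1)) ^ 3 * (\<epsilon> powr (- \<rho> / \<alpha>)) ^ 3"
      using G0 by (simp add: power_mono flip: power_mult_distrib)
    also have "(\<epsilon> powr (- \<rho> / \<alpha>)) ^ 3 = \<epsilon> powr (- \<rho> / \<alpha> * real 3)"
      using e by (simp only: powr_realpow[symmetric] powr_gt_zero powr_powr)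
    also have "- \<rho> / \<alpha> * real 3 = - (\<gamma> - 2 * \<beta>) / \<alpha>"
      using params by (simp add: \<rho>_def field_simps)
    finally show ?thesis using 3 by (simp add: level_sum_const_def rate_factor_def \<rho>_def)
  qed
qed

lemma sum_level_costs_le:
  assumes e: "0 < \<epsilon>" and L: "A ^ L \<le> level_const * \<epsilon> powr (- 1 / \<alpha>)"
  shows "(\<Sum>l=1..L. (A powr \<gamma>) ^ l)
           \<le> A powr \<gamma> / (A powr \<gamma> - 1) * level_const powr \<gamma> * \<epsilon> powr (- \<gamma> / \<alpha>)"
proof -
  have g: "1 < A powr \<gamma>" using params by simp
  have "(A powr \<gamma>) ^ L = (A ^ L) powr \<gamma>" using params by (simp add: pow_powr)
  also have "\<dots> \<le> (level_const * \<epsilon> powr (- 1 / \<alpha>)) powr \<gamma>"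
    using L params by (intro powr_mono2) auto
  also have "\<dots> = level_const powr \<gamma> * \<epsilon> powr (- \<gamma> / \<alpha>)"
    using level_const_ge params e by (simp add: powr_mult powr_powr)
  finally show ?thesis
    using geometric_sum_le_gt1[OF g, of L] g
    by (smt (verit) divide_pos_pos mult.assoc mult_left_mono)
qed


text \<open>With level errors \<open>V\<^sub>l = N\<^sub>l\<^bsup>-\<beta>\<^esup>\<close> and costs \<open>C\<^sub>l = N\<^sub>l\<^bsup>\<gamma>\<^esup>\<close>, minimising
  \<open>\<Sum> M\<^sub>l C\<^sub>l\<close> subject to \<open>\<Sum> M\<^sub>l\<^bsup>-1/2\<^esup> V\<^sub>l \<le> \<epsilon>\<close> gives \<open>M\<^sub>l \<sim> (V\<^sub>l / C\<^sub>l)\<^bsup>2/3\<^esup>\<close>, and the total cost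
  becomes \<open>\<epsilon>\<^sup>-\<^sup>2 (\<Sum> (V\<^sub>l\<^sup>2 C\<^sub>l)\<^bsup>1/3\<^esup>)\<^sup>3\<close>, a cubed geometric sum with ratio \<open>level_ratio\<close>.\<close>

definition sample_ratio :: real where
  "sample_ratio = A powr (- (2 / 3) * (\<beta> + \<gamma>))"

definition sample_size :: "real \<Rightarrow> nat \<Rightarrow> nat" where
  "sample_size T l = nat \<lceil>T * sample_ratio ^ l\<rceil>"

lemma sample_size_bounds:
  assumes "0 < T"
  shows "1 \<le> sample_size T l" "T * sample_ratio ^ l \<le> real (sample_size T l)"
    "real (sample_size T l) \<le> T * sample_ratio ^ l + 1"
proof -
  have pos: "0 < T * sample_ratio ^ l" using assms params by (simp add: sample_ratio_def)
  show ge: "T * sample_ratio ^ l \<le> real (sample_size T l)"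
    unfolding sample_size_def by (rule real_nat_ceiling_ge)
  show "1 \<le> sample_size T l" using ge pos by linarith
  show "real (sample_size T l) \<le> T * sample_ratio ^ l + 1"
    using pos of_int_ceiling_le_add_one[of "T * sample_ratio ^ l"] by (simp add: sample_size_def)
qed

lemma statistical_error_le:
  assumes R: "0 < R" and T: "0 < T"
  shows "(\<Sum>l=1..L. R * C\<beta> * real (sample_size T l) powr (- 1 / 2) * real (N l) powr (- \<beta>))
           \<le> R * C\<beta> * c1 powr (- \<beta>) * T powr (- 1 / 2) * (\<Sum>l=1..L. level_ratio ^ l)"
proof -
  have v0: "0 < sample_ratio" using params by (simp add: sample_ratio_def)
  have "- (2 / 3) * (\<beta> + \<gamma>) * (- 1 / 2) + - \<beta> = (\<gamma> - 2 * \<beta>) / 3" by (simp add: field_simps)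
  then have ratio: "sample_ratio powr (- 1 / 2) * A powr (- \<beta>) = level_ratio"
    by (simp only: sample_ratio_def level_ratio_def powr_powr powr_add[symmetric])
  have "R * C\<beta> * real (sample_size T l) powr (- 1 / 2) * real (N l) powr (- \<beta>)
      \<le> R * C\<beta> * c1 powr (- \<beta>) * T powr (- 1 / 2) * level_ratio ^ l" if l: "1 \<le> l" for l
  proof -
    have "real (sample_size T l) powr (- 1 / 2) \<le> (T * sample_ratio ^ l) powr (- 1 / 2)"
      using sample_size_bounds(2)[OF T, of l] T v0 by (intro powr_mono2') auto
    also have "\<dots> = T powr (- 1 / 2) * (sample_ratio powr (- 1 / 2)) ^ l"
      using T v0 by (simp add: powr_mult pow_powr)
    finally have "real (sample_size T l) powr (- 1 / 2) \<le> T powr (- 1 / 2) * (sample_ratio powr (- 1 / 2)) ^ l" .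
    moreover have "real (N l) powr (- \<beta>) \<le> (c1 * A ^ l) powr (- \<beta>)"
      using N_equiv(3)[OF l] N_equiv(1) params by (intro powr_mono2') auto
    then have "real (N l) powr (- \<beta>) \<le> c1 powr (- \<beta>) * (A powr (- \<beta>)) ^ l"
      using N_equiv(1) params by (simp add: powr_mult pow_powr)
    ultimately have "real (sample_size T l) powr (- 1 / 2) * real (N l) powr (- \<beta>)
        \<le> T powr (- 1 / 2) * (sample_ratio powr (- 1 / 2)) ^ l * (c1 powr (- \<beta>) * (A powr (- \<beta>)) ^ l)"
      by (intro mult_mono) auto
    also have "\<dots> = T powr (- 1 / 2) * c1 powr (- \<beta>) * (sample_ratio powr (- 1 / 2) * A powr (- \<beta>)) ^ l"
      by (simp add: power_mult_distrib mult_ac)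
    finally have "real (sample_size T l) powr (- 1 / 2) * real (N l) powr (- \<beta>)
        \<le> T powr (- 1 / 2) * c1 powr (- \<beta>) * level_ratio ^ l"
      unfolding ratio .
    then show ?thesis
      using R params by (simp add: mult_left_mono mult_ac)
  qed
  then show ?thesis
    unfolding sum_distrib_left by (intro sum_mono) auto
qed

lemma total_cost_le:
  assumes T: "0 < T"
  shows "(\<Sum>l=1..L. real (sample_size T l) * Cost l)
           \<le> C\<gamma> * c2 powr \<gamma> * (T * (\<Sum>l=1..L. level_ratio ^ l) + (\<Sum>l=1..L. (A powr \<gamma>) ^ l))"
proof -
  have ratio: "sample_ratio * A powr \<gamma> = level_ratio"
    using params by (simp add: sample_ratio_def level_ratio_def powr_add[symmetric] field_simps)
  have "real (sample_size T l) * Cost l \<le> C\<gamma> * c2 powr \<gamma> * (T * level_ratio ^ l + (A powr \<gamma>) ^ l)"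
    if l: "1 \<le> l" for l
  proof -
    define X where "X = C\<gamma> * c2 powr \<gamma> * (A powr \<gamma>) ^ l"
    have "real (N l) powr \<gamma> \<le> (c2 * A ^ l) powr \<gamma>"
      using N_equiv(3)[OF l] params by (intro powr_mono2) auto
    then have "Cost l \<le> C\<gamma> * (c2 * A ^ l) powr \<gamma>"
      using cost[OF l] params by (meson mult_left_mono less_imp_le order_trans)
    also have "\<dots> = X"
      using N_equiv(2) params by (simp add: X_def powr_mult pow_powr)
    finally have "real (sample_size T l) * Cost l \<le> real (sample_size T l) * X"
      by (rule mult_left_mono) simp
    also have "\<dots> \<le> (T * sample_ratio ^ l + 1) * X"
      using sample_size_bounds(3)[OF T, of l] params by (intro mult_right_mono) (auto simp: X_def)
    also have "\<dots> = C\<gamma> * c2 powr \<gamma> * (T * (sample_ratio * A powr \<gamma>) ^ l + (A powr \<gamma>) ^ l)"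
      by (simp add: X_def algebra_simps power_mult_distrib)
    finally show ?thesis unfolding ratio .
  qed
  then have "(\<Sum>l=1..L. real (sample_size T l) * Cost l)
      \<le> (\<Sum>l=1..L. C\<gamma> * c2 powr \<gamma> * (T * level_ratio ^ l + (A powr \<gamma>) ^ l))"
    by (intro sum_mono) auto
  also have "\<dots> = C\<gamma> * c2 powr \<gamma> * (T * (\<Sum>l=1..L. level_ratio ^ l) + (\<Sum>l=1..L. (A powr \<gamma>) ^ l))"
    by (simp only: sum_distrib_left[symmetric] sum.distrib)
  finally show ?thesis .
qed

lemma rate_factor_nonneg: "0 < \<epsilon> \<Longrightarrow> 0 \<le> rate_factor \<epsilon>"
  by (simp add: rate_factor_def)

lemma cost_rate_eq:
  assumes "0 < \<epsilon>"
  shows "\<epsilon> powr (- \<gamma> / \<alpha>) + rate_factor \<epsilon> * \<epsilon> powr (-2) =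
    (if \<beta> > \<gamma> / 2 then \<epsilon> powr (- \<gamma> / \<alpha>) + \<epsilon> powr (-2)
     else if \<beta> = \<gamma> / 2 then \<epsilon> powr (- \<gamma> / \<alpha>) + \<epsilon> powr (-2) * \<bar>log A \<epsilon>\<bar> ^ 3
     else \<epsilon> powr (- \<gamma> / \<alpha>) + \<epsilon> powr (-2 - (\<gamma> - 2 * \<beta>) / \<alpha>))"
proof -
  have "\<epsilon> powr (- (\<gamma> - 2 * \<beta>) / \<alpha>) * \<epsilon> powr (-2) = \<epsilon> powr (- (\<gamma> - 2 * \<beta>) / \<alpha> + -2)"
    by (simp only: powr_add)
  also have "- (\<gamma> - 2 * \<beta>) / \<alpha> + -2 = -2 - (\<gamma> - 2 * \<beta>) / \<alpha>"
    using params by (simp add: field_simps)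
  finally show ?thesis by (simp add: rate_factor_def mult.commute)
qed

definition cost_const :: "real \<Rightarrow> real" where
  "cost_const R = C\<gamma> * c2 powr \<gamma> * (16 * (R * C\<beta> * c1 powr (- \<beta>))\<^sup>2 * level_sum_const
     + A powr \<gamma> / (A powr \<gamma> - 1) * level_const powr \<gamma>)"

lemma cost_const_pos: "0 < cost_const R"
proof -
  have "0 < A powr \<gamma> / (A powr \<gamma> - 1) * level_const powr \<gamma>"
    using params level_const_ge by simp
  then show ?thesis
    using params N_equiv level_sum_const_nonneg
    by (simp add: cost_const_def add_nonneg_pos)
qed

lemma mlmc_parameters:
  assumes R: "0 < R" and e: "0 < \<epsilon>" "\<epsilon> \<le> 1 / 2"
  obtains L T where "1 \<le> L" "0 < T" "C\<alpha> * real (N L) powr (- \<alpha>) \<le> \<epsilon> / 4"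
    "(\<Sum>l=1..L. R * C\<beta> * real (sample_size T l) powr (- 1 / 2) * real (N l) powr (- \<beta>)) \<le> \<epsilon> / 4"
    "(\<Sum>l=1..L. real (sample_size T l) * Cost l)
       \<le> cost_const R * (\<epsilon> powr (- \<gamma> / \<alpha>) + rate_factor \<epsilon> * \<epsilon> powr (-2))"
proof -
  obtain L where L: "1 \<le> L" "C\<alpha> * real (N L) powr (- \<alpha>) \<le> \<epsilon> / 4"
    "A ^ L \<le> level_const * \<epsilon> powr (- 1 / \<alpha>)"
    using exists_num_levels[OF e] .
  define D where "D = R * C\<beta> * c1 powr (- \<beta>)"
  define G where "G = (\<Sum>l=1..L. level_ratio ^ l)"
  define T where "T = (4 * D * G / \<epsilon>)\<^sup>2"
  have D: "0 < D" using R params N_equiv by (simp add: D_def)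
  have G: "0 < G" unfolding G_def using L(1) params by (intro sum_pos) (auto simp: level_ratio_def)
  have T: "0 < T" using D G e by (simp add: T_def)
  have "T powr (- 1 / 2) = ((4 * D * G / \<epsilon>) powr 2) powr (- 1 / 2)"
    using D G e by (simp add: T_def powr_numeral)
  also have "\<dots> = \<epsilon> / (4 * D * G)"
    using D G e by (simp add: powr_powr powr_minus_divide)
  finally have "D * T powr (- 1 / 2) * G = \<epsilon> / 4" using D G by simp
  then have stat: "(\<Sum>l=1..L. R * C\<beta> * real (sample_size T l) powr (- 1 / 2) * real (N l) powr (- \<beta>))
      \<le> \<epsilon> / 4"
    using statistical_error_le[OF R T, of L] by (simp add: D_def G_def)
  have "T * G = 16 * D\<^sup>2 * G ^ 3 * \<epsilon> powr (-2)"
    using e by (simp add: T_def powr_minus_divide power2_eq_square power3_eq_cube field_simps)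
  also have "\<dots> \<le> 16 * D\<^sup>2 * (level_sum_const * rate_factor \<epsilon>) * \<epsilon> powr (-2)"
    using level_sum_cube_le[OF e L(3)] by (intro mult_right_mono mult_left_mono) (auto simp: G_def)
  finally have "(\<Sum>l=1..L. real (sample_size T l) * Cost l)
      \<le> C\<gamma> * c2 powr \<gamma> * (16 * D\<^sup>2 * level_sum_const * (rate_factor \<epsilon> * \<epsilon> powr (-2))
           + A powr \<gamma> / (A powr \<gamma> - 1) * level_const powr \<gamma> * \<epsilon> powr (- \<gamma> / \<alpha>))"
    using total_cost_le[OF T, of L] sum_level_costs_le[OF e(1) L(3)] params N_equiv
    by (smt (verit, ccfv_SIG) G_def mult.assoc mult_left_mono powr_ge_zero)
  also have "\<dots> \<le> cost_const R * (\<epsilon> powr (- \<gamma> / \<alpha>) + rate_factor \<epsilon> * \<epsilon> powr (-2))"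
  proof -
    have mixed_le: "a * y + b * x \<le> (a + b) * (x + y)" if "0 \<le> a" "0 \<le> b" "0 \<le> x" "0 \<le> y"
      for a b x y :: real
      using that mult_nonneg_nonneg[of a x] mult_nonneg_nonneg[of b y] by (simp add: algebra_simps)
    define a where "a = 16 * D\<^sup>2 * level_sum_const"
    define b where "b = A powr \<gamma> / (A powr \<gamma> - 1) * level_const powr \<gamma>"
    have "1 < A powr \<gamma>" using params by simp
    then have "0 \<le> a" "0 \<le> b" using level_sum_const_nonneg by (simp_all add: a_def b_def)
    then have "C\<gamma> * c2 powr \<gamma> * (a * (rate_factor \<epsilon> * \<epsilon> powr (-2)) + b * \<epsilon> powr (- \<gamma> / \<alpha>))
        \<le> C\<gamma> * c2 powr \<gamma> * ((a + b) * (\<epsilon> powr (- \<gamma> / \<alpha>) + rate_factor \<epsilon> * \<epsilon> powr (-2)))"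
      using params rate_factor_nonneg[OF e(1)] by (intro mult_left_mono mixed_le) auto
    then show ?thesis by (simp add: a_def b_def cost_const_def D_def mult.assoc)
  qed
  finally show ?thesis using that L(1,2) T stat by blast
qed

definition error_bound :: "real \<Rightarrow> (nat \<Rightarrow> nat) \<Rightarrow> nat \<Rightarrow> real" where
  "error_bound R M L = C\<alpha> * real (N L) powr (- \<alpha>)
     + (\<Sum>l=1..L. R * C\<beta> * real (M l) powr (- 1 / 2) * real (N l) powr (- \<beta>))"

theorem mlmc_complexity:
  fixes E :: "nat \<Rightarrow> (nat \<Rightarrow> nat) \<Rightarrow> ennreal"
  assumes R: "0 < R"
    and err: "\<And>L M. 1 \<le> L \<Longrightarrow> \<forall>l\<in>{1..L}. 1 \<le> M l \<Longrightarrow> E L M \<le> ennreal (error_bound R M L)"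
  shows "\<exists>K>0. \<forall>\<epsilon>::real. 0 < \<epsilon> \<and> \<epsilon> \<le> 1/2 \<longrightarrow>
     (\<exists>L::nat. \<exists>M::nat \<Rightarrow> nat. 1 \<le> L \<and> (\<forall>l\<in>{1..L}. 1 \<le> M l) \<and> E L M < ennreal \<epsilon> \<and>
        (\<Sum>l=1..L. real (M l) * Cost l) \<le> K *
          (if \<beta> > \<gamma> / 2 then \<epsilon> powr (- \<gamma> / \<alpha>) + \<epsilon> powr (-2)
           else if \<beta> = \<gamma> / 2 then \<epsilon> powr (- \<gamma> / \<alpha>) + \<epsilon> powr (-2) * \<bar>log A \<epsilon>\<bar> ^ 3
           else \<epsilon> powr (- \<gamma> / \<alpha>) + \<epsilon> powr (-2 - (\<gamma> - 2 * \<beta>) / \<alpha>)))"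
proof (intro exI[of _ "cost_const R"] conjI cost_const_pos allI impI)
  fix \<epsilon> :: real
  assume e: "0 < \<epsilon> \<and> \<epsilon> \<le> 1/2"
  then obtain L T where L: "1 \<le> L" and T: "0 < T" and "C\<alpha> * real (N L) powr (- \<alpha>) \<le> \<epsilon> / 4"
    "(\<Sum>l=1..L. R * C\<beta> * real (sample_size T l) powr (- 1 / 2) * real (N l) powr (- \<beta>)) \<le> \<epsilon> / 4"
    and cost: "(\<Sum>l=1..L. real (sample_size T l) * Cost l)
       \<le> cost_const R * (\<epsilon> powr (- \<gamma> / \<alpha>) + rate_factor \<epsilon> * \<epsilon> powr (-2))"
    using mlmc_parameters[OF R] by blast
  then have "error_bound R (sample_size T) L < \<epsilon>"
    using e by (simp add: error_bound_def)
  moreover have M: "\<forall>l\<in>{1..L}. 1 \<le> sample_size T l"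
    using sample_size_bounds(1)[OF T] by blast
  ultimately have "E L (sample_size T) < ennreal \<epsilon>"
    using err[OF L M] e by (metis ennreal_lessI order.strict_trans1)
  moreover have e0: "0 < \<epsilon>" using e by simp
  ultimately show "\<exists>L M. 1 \<le> L \<and> (\<forall>l\<in>{1..L}. 1 \<le> M l) \<and> E L M < ennreal \<epsilon> \<and>
      (\<Sum>l=1..L. real (M l) * Cost l) \<le> cost_const R *
          (if \<beta> > \<gamma> / 2 then \<epsilon> powr (- \<gamma> / \<alpha>) + \<epsilon> powr (-2)
           else if \<beta> = \<gamma> / 2 then \<epsilon> powr (- \<gamma> / \<alpha>) + \<epsilon> powr (-2) * \<bar>log A \<epsilon>\<bar> ^ 3
           else \<epsilon> powr (- \<gamma> / \<alpha>) + \<epsilon> powr (-2 - (\<gamma> - 2 * \<beta>) / \<alpha>))"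
    unfolding cost_rate_eq[OF e0, symmetric] using L M cost by blast
qed

end


section \<open>Error of the multilevel estimator\<close>

lemma AE_integrable_eval_of_Lpq_norm_finite:
  fixes P :: "'w measure" and S :: "'s measure" and Y :: "'w \<Rightarrow> 's \<Rightarrow> real"
  assumes P: "prob_space P" and p: "1 \<le> p" and q: "1 \<le> q"
    and Y: "jointly_measurable P S Y" and fin: "Lpq_norm P S p q Y < \<infinity>"
  shows "AE s in S. integrable P (\<lambda>\<omega>. Y \<omega> s)"
proof -
  interpret prob_space P by fact
  have G: "(\<lambda>(\<omega>, s). ennreal \<bar>Y \<omega> s\<bar>) \<in> borel_measurable (P \<Otimes>\<^sub>M S)"
    using jointly_measurable_pair[OF Y] by (simp add: case_prod_beta')
  have "nn_Lnorm S p (\<lambda>s. nn_Lnorm P q (\<lambda>\<omega>. ennreal \<bar>Y \<omega> s\<bar>)) < \<top>"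
    using fin p q by (simp add: Lpq_norm_eq_nn_Lnorm)
  from AE_finite_of_nn_Lnorm_finite[OF this borel_measurable_nn_Lnorm_section[OF sigma_finite_measure G]]
  have "AE s in S. nn_Lnorm P q (\<lambda>\<omega>. ennreal \<bar>Y \<omega> s\<bar>) < \<top>" .
  then show ?thesis using AE_space[of S]
  proof eventually_elim
    case (elim s)
    have Ys: "(\<lambda>\<omega>. Y \<omega> s) \<in> borel_measurable P" using jointly_measurable_eval[OF Y elim(2)] .
    have "(\<integral>\<^sup>+\<omega>. epowr (ennreal \<bar>Y \<omega> s\<bar>) q \<partial>P) < \<top>"
      using elim(1) unfolding nn_Lnorm_def by (metis epowr_eq_top_iff less_top)
    then have "(\<integral>\<^sup>+\<omega>. ennreal (\<bar>Y \<omega> s\<bar> powr q) \<partial>P) < \<top>" by (simp add: epowr_ennreal)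
    then have "integrable P (\<lambda>\<omega>. \<bar>Y \<omega> s\<bar> powr q)"
      by (intro integrableI_nonneg) (use Ys in auto)
    then show "integrable P (\<lambda>\<omega>. Y \<omega> s)"
      by (rule integrable_bounded_by_abs_powr[OF _ Ys _ _ q]) simp_all
  qed
qed

lemma Lqp_norm_diff_sum_le:
  fixes P :: "'w measure" and S :: "'s measure" and Z :: "nat \<Rightarrow> 'w \<Rightarrow> 's \<Rightarrow> real"
  assumes P: "prob_space P" and S: "sigma_finite_measure S" and p: "1 \<le> p" and q: "1 \<le> q"
    and b: "b \<in> borel_measurable S" and Z: "\<And>l. l \<in> I \<Longrightarrow> jointly_measurable P S (Z l)"
  shows "Lqp_norm P S q p (\<lambda>\<omega> s. b s - (\<Sum>l\<in>I. Z l \<omega> s))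
           \<le> Lp_norm S p b + (\<Sum>l\<in>I. Lqp_norm P S q p (Z l))"
proof -
  interpret prob_space P by fact
  have Lp_le: "Lp_norm S p (\<lambda>s. b s - (\<Sum>l\<in>I. Z l \<omega> s)) \<le> Lp_norm S p b + (\<Sum>l\<in>I. Lp_norm S p (Z l \<omega>))"
    if \<omega>: "\<omega> \<in> space P" for \<omega>
  proof -
    have [measurable]: "Z l \<omega> \<in> borel_measurable S" if "l \<in> I" for l
      using jointly_measurable_sample[OF Z[OF that] \<omega>] .
    have "ennreal \<bar>b s - (\<Sum>l\<in>I. Z l \<omega> s)\<bar> \<le> ennreal (\<bar>b s\<bar> + (\<Sum>l\<in>I. \<bar>Z l \<omega> s\<bar>))" for s
      using abs_triangle_ineq4[of "b s"] sum_abs[of "\<lambda>l. Z l \<omega> s" I] by (intro ennreal_leI) linarith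
    also have "ennreal (\<bar>b s\<bar> + (\<Sum>l\<in>I. \<bar>Z l \<omega> s\<bar>)) = ennreal \<bar>b s\<bar> + (\<Sum>l\<in>I. ennreal \<bar>Z l \<omega> s\<bar>)"
      for s by (simp add: ennreal_plus sum_ennreal sum_nonneg)
    finally have "Lp_norm S p (\<lambda>s. b s - (\<Sum>l\<in>I. Z l \<omega> s))
        \<le> nn_Lnorm S p (\<lambda>s. ennreal \<bar>b s\<bar> + (\<Sum>l\<in>I. ennreal \<bar>Z l \<omega> s\<bar>))"
      unfolding Lp_norm_eq_nn_Lnorm using p by (intro nn_Lnorm_mono_AE AE_I2) auto
    also have "\<dots> \<le> nn_Lnorm S p (\<lambda>s. ennreal \<bar>b s\<bar>) + nn_Lnorm S p (\<lambda>s. \<Sum>l\<in>I. ennreal \<bar>Z l \<omega> s\<bar>)"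
      using p b by (intro nn_Lnorm_add_le) (auto intro!: borel_measurable_sum)
    also have "nn_Lnorm S p (\<lambda>s. \<Sum>l\<in>I. ennreal \<bar>Z l \<omega> s\<bar>) \<le> (\<Sum>l\<in>I. nn_Lnorm S p (\<lambda>s. ennreal \<bar>Z l \<omega> s\<bar>))"
      using p by (intro nn_Lnorm_sum_le) auto
    finally show ?thesis by (simp add: Lp_norm_eq_nn_Lnorm add_left_mono)
  qed
  have Lp_meas: "(\<lambda>\<omega>. Lp_norm S p (Z l \<omega>)) \<in> borel_measurable P" if "l \<in> I" for l
    by (rule borel_measurable_Lp_norm_sample[OF S Z[OF that]])
  have "Lqp_norm P S q p (\<lambda>\<omega> s. b s - (\<Sum>l\<in>I. Z l \<omega> s))
      = nn_Lnorm P q (\<lambda>\<omega>. Lp_norm S p (\<lambda>s. b s - (\<Sum>l\<in>I. Z l \<omega> s)))"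
    using p q by (simp add: Lqp_norm_eq_nn_Lnorm)
  also have "\<dots> \<le> nn_Lnorm P q (\<lambda>\<omega>. Lp_norm S p b + (\<Sum>l\<in>I. Lp_norm S p (Z l \<omega>)))"
    using q Lp_le by (intro nn_Lnorm_mono_AE AE_I2) auto
  also have "\<dots> \<le> nn_Lnorm P q (\<lambda>\<omega>. Lp_norm S p b) + nn_Lnorm P q (\<lambda>\<omega>. \<Sum>l\<in>I. Lp_norm S p (Z l \<omega>))"
    using q Lp_meas by (intro nn_Lnorm_add_le) auto
  also have "nn_Lnorm P q (\<lambda>\<omega>. Lp_norm S p b) = Lp_norm S p b"
    using q by (intro nn_Lnorm_const) auto
  also have "nn_Lnorm P q (\<lambda>\<omega>. \<Sum>l\<in>I. Lp_norm S p (Z l \<omega>))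
      \<le> (\<Sum>l\<in>I. nn_Lnorm P q (\<lambda>\<omega>. Lp_norm S p (Z l \<omega>)))"
    using q Lp_meas by (intro nn_Lnorm_sum_le) auto
  also have "(\<Sum>l\<in>I. nn_Lnorm P q (\<lambda>\<omega>. Lp_norm S p (Z l \<omega>))) = (\<Sum>l\<in>I. Lqp_norm P S q p (Z l))"
    using p q by (simp add: Lqp_norm_eq_nn_Lnorm)
  finally show ?thesis by (simp add: add_left_mono)
qed


lemma mlmc_estimator_decomposition:
  fixes e :: real and \<mu> :: "nat \<Rightarrow> real" and \<xi> :: "nat \<Rightarrow> nat \<Rightarrow> real"
  assumes "\<mu> 0 = 0" and M: "\<forall>l\<in>{1..L}. 1 \<le> M l"
  shows "e - (\<Sum>l=1..L. (1 / real (M l)) * (\<Sum>j=1..M l. \<xi> l j))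
    = (e - \<mu> L) - (\<Sum>l=1..L. (1 / real (M l)) * (\<Sum>j=1..M l. \<xi> l j - (\<mu> l - \<mu> (l - 1))))"
proof -
  have avg: "(1 / real n) * (\<Sum>j=1..n. f j - c) = (1 / real n) * (\<Sum>j=1..n. f j) - c"
    if "1 \<le> n" for n and f :: "nat \<Rightarrow> real" and c
    using that by (simp add: sum_subtractf right_diff_distrib)
  have "(1 / real (M l)) * (\<Sum>j=1..M l. \<xi> l j - (\<mu> l - \<mu> (l - 1)))
      = (1 / real (M l)) * (\<Sum>j=1..M l. \<xi> l j) - (\<mu> l - \<mu> (l - 1))" if "l \<in> {1..L}" for l
    using M that by (intro avg) auto
  then have "(\<Sum>l=1..L. (1 / real (M l)) * (\<Sum>j=1..M l. \<xi> l j - (\<mu> l - \<mu> (l - 1))))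
      = (\<Sum>l=1..L. (1 / real (M l)) * (\<Sum>j=1..M l. \<xi> l j)) - (\<Sum>l=1..L. \<mu> l - \<mu> (l - 1))"
    by (simp add: sum_subtractf)
  moreover have "(\<Sum>l=1..L. \<mu> l - \<mu> (l - 1)) = \<mu> L"
    using sum_telescope''[of 0 L \<mu>] assms(1) by simp
  ultimately show ?thesis by simp
qed

text \<open>The bias and the level errors are combined by the triangle inequality alone: no orthogonality
  of the level corrections is available in \<open>L\<^sup>q(\<Omega>; L\<^sup>p(S))\<close>.\<close>

lemma level_estimator_error_le:
  fixes P :: "'w measure" and S :: "'s measure" and U W :: "'w \<Rightarrow> 's \<Rightarrow> real"
    and \<xi> :: "nat \<Rightarrow> 'w \<Rightarrow> 's \<Rightarrow> real" and n :: nat and V :: real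
  defines "m \<equiv> \<lambda>s. expec P U s - expec P W s"
  assumes P: "prob_space P" and S: "sigma_finite_measure S" and q: "2 \<le> q" and p: "1 \<le> p" "p \<le> q"
    and U: "jointly_measurable P S U" "AE s in S. integrable P (\<lambda>\<omega>. U \<omega> s)"
    and W: "jointly_measurable P S W" "AE s in S. integrable P (\<lambda>\<omega>. W \<omega> s)"
    and variance: "Lpq_norm P S p q (\<lambda>\<omega> s. U \<omega> s - expec P U s - (W \<omega> s - expec P W s)) \<le> ennreal V"
    and V: "0 \<le> V"
    and \<xi>: "\<And>j. jointly_measurable P S (\<xi> j)"
    and indep: "prob_space.indep_vars P (\<lambda>_. PiM (space S) (\<lambda>_. borel))
                  (\<lambda>j \<omega>. restrict (\<xi> j \<omega>) (space S)) UNIV"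
    and law: "\<And>j. law P S (\<xi> j) = law P S (\<lambda>\<omega> s. U \<omega> s - W \<omega> s)"
    and n: "1 \<le> n"
  shows "Lqp_norm P S q p (\<lambda>\<omega> s. (1 / real n) * (\<Sum>j=1..n. \<xi> j \<omega> s - m s))
           \<le> ennreal (MZ_const q powr (1 / q) * real n powr (- 1 / 2) * V)"
proof -
  interpret prob_space P by fact
  have [measurable]: "(\<lambda>x. U (fst x) (snd x)) \<in> borel_measurable (P \<Otimes>\<^sub>M S)"
    "(\<lambda>x. W (fst x) (snd x)) \<in> borel_measurable (P \<Otimes>\<^sub>M S)"
    using jointly_measurable_pair U(1) W(1) by blast+
  have "m \<in> borel_measurable S"
    unfolding m_def using borel_measurable_expec[OF sigma_finite_measure] U(1) W(1) by measurable
  moreover have "AE s in S. integrable P (\<lambda>\<omega>. U \<omega> s - W \<omega> s) \<and> (\<integral>\<omega>. U \<omega> s - W \<omega> s \<partial>P) = m s"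
    using U(2) W(2) by eventually_elim (simp add: m_def expec_def)
  ultimately have "Lqp_norm P S q p (\<lambda>\<omega> s. (1 / real n) * (\<Sum>j=1..n. \<xi> j \<omega> s - m s))
      \<le> ennreal (MZ_const q powr (1 / q) * real n powr (- 1 / 2))
        * Lpq_norm P S p q (\<lambda>\<omega> s. U \<omega> s - W \<omega> s - m s)"
    by (intro Lqp_norm_mean_of_copies_le[OF P S q p _ _ \<xi> indep law _ n] jointly_measurableI) measurable
  also have "Lpq_norm P S p q (\<lambda>\<omega> s. U \<omega> s - W \<omega> s - m s) \<le> ennreal V"
    using variance by (simp add: m_def algebra_simps)
  finally show ?thesis
    using V by (simp add: ennreal_mult mult_left_mono)
qed

lemma mlmc_error_le:
  fixes P :: "'w measure" and S :: "'s measure" and X :: "'w \<Rightarrow> 's \<Rightarrow> real"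
    and Xl :: "nat \<Rightarrow> 'w \<Rightarrow> 's \<Rightarrow> real" and \<xi>c :: "nat \<Rightarrow> nat \<Rightarrow> 'w \<Rightarrow> 's \<Rightarrow> real"
    and M :: "nat \<Rightarrow> nat" and B :: real and V :: "nat \<Rightarrow> real"
  assumes P: "prob_space P" and S: "sigma_finite_measure S" and q: "2 \<le> q" and p: "1 \<le> p" "p \<le> q"
    and X: "jointly_measurable P S X"
    and Xl: "\<And>l. 1 \<le> l \<Longrightarrow> jointly_measurable P S (Xl l)"
    and Xl_Lpq: "\<And>l. 1 \<le> l \<Longrightarrow> Lpq_norm P S p q (Xl l) < \<infinity>"
    and Xl0: "Xl 0 = (\<lambda>\<omega> s. 0)"
    and bias: "Lp_norm S p (\<lambda>s. expec P X s - expec P (Xl L) s) \<le> ennreal B" and B: "0 \<le> B"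
    and variance: "\<And>l. l \<in> {1..L} \<Longrightarrow>
       Lpq_norm P S p q (\<lambda>\<omega> s. Xl l \<omega> s - expec P (Xl l) s - (Xl (l - 1) \<omega> s - expec P (Xl (l - 1)) s))
         \<le> ennreal (V l)" and V: "\<And>l. 0 \<le> V l"
    and \<xi>c: "\<And>l j. l \<in> {1..L} \<Longrightarrow> jointly_measurable P S (\<xi>c l j)"
    and indep: "\<And>l. l \<in> {1..L} \<Longrightarrow>
       prob_space.indep_vars P (\<lambda>_. PiM (space S) (\<lambda>_. borel)) (\<lambda>j \<omega>. restrict (\<xi>c l j \<omega>) (space S)) UNIV"
    and law: "\<And>l j. l \<in> {1..L} \<Longrightarrow> law P S (\<xi>c l j) = law P S (\<lambda>\<omega> s. Xl l \<omega> s - Xl (l - 1) \<omega> s)"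
    and M: "\<forall>l\<in>{1..L}. 1 \<le> M l"
  shows "Lqp_norm P S q p (\<lambda>\<omega> s. expec P X s - (\<Sum>l=1..L. (1 / real (M l)) * (\<Sum>j=1..M l. \<xi>c l j \<omega> s)))
           \<le> ennreal (B + (\<Sum>l=1..L. MZ_const q powr (1 / q) * real (M l) powr (- 1 / 2) * V l))"
proof -
  interpret prob_space P by fact
  have Xl': "jointly_measurable P S (Xl l)" for l
    using Xl[of l] Xl0 by (cases "l = 0") (auto simp: jointly_measurable_def)
  have Xl_mean: "AE s in S. integrable P (\<lambda>\<omega>. Xl l \<omega> s)" for l
    using AE_integrable_eval_of_Lpq_norm_finite[OF P p(1) _ Xl' Xl_Lpq[of l]] q Xl0
    by (cases "l = 0") auto
  have [measurable]: "expec P X \<in> borel_measurable S" "expec P (Xl k) \<in> borel_measurable S" for k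
    using borel_measurable_expec[OF sigma_finite_measure] X Xl' by blast+
  define Z where "Z l \<omega> s = (1 / real (M l)) * (\<Sum>j=1..M l. \<xi>c l j \<omega> s
      - (expec P (Xl l) s - expec P (Xl (l - 1)) s))" for l \<omega> s
  have Z: "Lqp_norm P S q p (Z l) \<le> ennreal (MZ_const q powr (1 / q) * real (M l) powr (- 1 / 2) * V l)"
    if l: "l \<in> {1..L}" for l
    unfolding Z_def using M l
    by (intro level_estimator_error_le[OF P S q p Xl' Xl_mean Xl' Xl_mean variance[OF l] V
          \<xi>c[OF l] indep[OF l] law[OF l]]) auto
  have Z_meas: "jointly_measurable P S (Z l)" if l: "l \<in> {1..L}" for l
  proof -
    have [measurable]: "(\<lambda>x. \<xi>c l j (fst x) (snd x)) \<in> borel_measurable (P \<Otimes>\<^sub>M S)" for j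
      using jointly_measurable_pair \<xi>c[OF l] by blast
    show ?thesis unfolding Z_def by (intro jointly_measurableI) measurable
  qed
  have "expec P (Xl 0) s = 0" for s using Xl0 by (simp add: expec_def)
  then have decomposition: "(\<lambda>\<omega> s. expec P X s - (\<Sum>l=1..L. (1 / real (M l)) * (\<Sum>j=1..M l. \<xi>c l j \<omega> s)))
      = (\<lambda>\<omega> s. (expec P X s - expec P (Xl L) s) - (\<Sum>l=1..L. Z l \<omega> s))"
    unfolding Z_def by (intro ext mlmc_estimator_decomposition[where \<mu> = "\<lambda>l. expec P (Xl l) _", OF _ M])
  have "Lqp_norm P S q p (\<lambda>\<omega> s. (expec P X s - expec P (Xl L) s) - (\<Sum>l=1..L. Z l \<omega> s))
      \<le> Lp_norm S p (\<lambda>s. expec P X s - expec P (Xl L) s) + (\<Sum>l=1..L. Lqp_norm P S q p (Z l))"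
    using p q Z_meas by (intro Lqp_norm_diff_sum_le[OF P S]) auto
  also have "\<dots> \<le> ennreal B + (\<Sum>l=1..L. ennreal (MZ_const q powr (1 / q) * real (M l) powr (- 1 / 2) * V l))"
    using bias Z by (intro add_mono sum_mono) auto
  also have "\<dots> = ennreal (B + (\<Sum>l=1..L. MZ_const q powr (1 / q) * real (M l) powr (- 1 / 2) * V l))"
    using B V by (simp add: sum_ennreal sum_nonneg ennreal_plus)
  finally show ?thesis unfolding decomposition .
qed

theorem mainTheorem14:
  fixes P :: "'w measure" and S :: "'s measure"
    and p q :: real
    and X :: "'w \<Rightarrow> 's \<Rightarrow> real"
    and Xl :: "nat \<Rightarrow> 'w \<Rightarrow> 's \<Rightarrow> real"
    and \<xi>c :: "nat \<Rightarrow> nat \<Rightarrow> 'w \<Rightarrow> 's \<Rightarrow> real"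
    and Cost :: "nat \<Rightarrow> real"
    and N :: "nat \<Rightarrow> nat"
    and \<alpha> \<beta> \<gamma> C\<alpha> C\<beta> C\<gamma> A c1 c2 :: real
  assumes probP: "prob_space P"
    and sfS: "sigma_finite_measure S"
    and avgS: "approx_by_averaging S"
    and q: "2 \<le> q" and p: "1 \<le> p" "p \<le> q"
    and X_meas: "jointly_measurable P S X"
    and X_L1: "(\<integral>\<^sup>+ \<omega>. Lp_norm S p (X \<omega>) \<partial>P) < \<infinity>"
    and Xl_meas: "\<And>l. 1 \<le> l \<Longrightarrow> jointly_measurable P S (Xl l)"
    and Xl_Lqp: "\<And>l. 1 \<le> l \<Longrightarrow> Lqp_norm P S q p (Xl l) < \<infinity>"
    and Xl_Lpq: "\<And>l. 1 \<le> l \<Longrightarrow> Lpq_norm P S p q (Xl l) < \<infinity>"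
    and Xl0: "Xl 0 = (\<lambda>\<omega> s. 0)"
    and params: "0 < \<alpha>" "0 < \<beta>" "0 < \<gamma>" "0 < C\<alpha>" "0 < C\<beta>" "0 < C\<gamma>" "1 < A"
    and N_equiv: "0 < c1" "0 < c2"
      "\<And>l. 1 \<le> l \<Longrightarrow> c1 * A ^ l \<le> real (N l) \<and> real (N l) \<le> c2 * A ^ l"
    and bias: "\<And>l. 1 \<le> l \<Longrightarrow>
       Lp_norm S p (\<lambda>s. expec P X s - expec P (Xl l) s) \<le> ennreal (C\<alpha> * real (N l) powr (- \<alpha>))"
    and variance: "\<And>l. 1 \<le> l \<Longrightarrow>
       Lpq_norm P S p q (\<lambda>\<omega> s. Xl l \<omega> s - expec P (Xl l) s - (Xl (l - 1) \<omega> s - expec P (Xl (l - 1)) s))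
         \<le> ennreal (C\<beta> * real (N l) powr (- \<beta>))"
    and cost: "\<And>l. 1 \<le> l \<Longrightarrow> Cost l \<le> C\<gamma> * real (N l) powr \<gamma>"
    and copies_meas: "\<And>l j. 1 \<le> l \<Longrightarrow> jointly_measurable P S (\<xi>c l j)"
    and copies_indep: "\<And>l. 1 \<le> l \<Longrightarrow>
       prob_space.indep_vars P (\<lambda>_. PiM (space S) (\<lambda>_. borel))
         (\<lambda>j \<omega>. restrict (\<xi>c l j \<omega>) (space S)) UNIV"
    and copies_law: "\<And>l j. 1 \<le> l \<Longrightarrow>
       law P S (\<xi>c l j) = law P S (\<lambda>\<omega> s. Xl l \<omega> s - Xl (l - 1) \<omega> s)"
  shows "\<exists>K>0. \<forall>\<epsilon>::real. 0 < \<epsilon> \<and> \<epsilon> \<le> 1/2 \<longrightarrow>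
     (\<exists>L::nat. \<exists>M::nat \<Rightarrow> nat. 1 \<le> L \<and> (\<forall>l\<in>{1..L}. 1 \<le> M l) \<and>
        Lqp_norm P S q p (\<lambda>\<omega> s. expec P X s -
            (\<Sum>l=1..L. (1 / real (M l)) * (\<Sum>j=1..M l. \<xi>c l j \<omega> s))) < ennreal \<epsilon> \<and>
        (\<Sum>l=1..L. real (M l) * Cost l) \<le> K *
          (if \<beta> > \<gamma> / 2 then \<epsilon> powr (- \<gamma> / \<alpha>) + \<epsilon> powr (-2)
           else if \<beta> = \<gamma> / 2 then \<epsilon> powr (- \<gamma> / \<alpha>) + \<epsilon> powr (-2) * \<bar>log A \<epsilon>\<bar> ^ 3
           else \<epsilon> powr (- \<gamma> / \<alpha>) + \<epsilon> powr (-2 - (\<gamma> - 2 * \<beta>) / \<alpha>)))"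
proof -
  interpret mlmc_rates \<alpha> \<beta> \<gamma> C\<alpha> C\<beta> C\<gamma> A c1 c2 N Cost
    using params N_equiv cost by unfold_locales auto
  have R: "0 < MZ_const q powr (1 / q)" using MZ_const_ge(4)[OF q] by simp
  show ?thesis
  proof (rule mlmc_complexity[OF R])
    fix L :: nat and M :: "nat \<Rightarrow> nat"
    assume L: "1 \<le> L" and M: "\<forall>l\<in>{1..L}. 1 \<le> M l"
    have "Lqp_norm P S q p (\<lambda>\<omega> s. expec P X s - (\<Sum>l=1..L. (1 / real (M l)) * (\<Sum>j=1..M l. \<xi>c l j \<omega> s)))
        \<le> ennreal (C\<alpha> * real (N L) powr (- \<alpha>)
             + (\<Sum>l=1..L. MZ_const q powr (1 / q) * real (M l) powr (- 1 / 2) * (C\<beta> * real (N l) powr (- \<beta>))))"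
      by (rule mlmc_error_le[OF probP sfS q p X_meas Xl_meas Xl_Lpq Xl0 bias[OF L]])
        (use params variance copies_meas copies_indep copies_law M in auto)
    then show "Lqp_norm P S q p (\<lambda>\<omega> s. expec P X s - (\<Sum>l=1..L. (1 / real (M l)) * (\<Sum>j=1..M l. \<xi>c l j \<omega> s)))
        \<le> ennreal (error_bound (MZ_const q powr (1 / q)) M L)"
      by (simp add: error_bound_def mult_ac)
  qed
qed

end
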